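(* Let $n\ge1$, $d\ge1$. Let $A_1,\dots,A_n:\mathbb{R}^d\rightrightarrows\mathbb{R}^d$ be maximal monotone and $B:\mathbb{R}^d\to\mathbb{R}^d$ monotone and $L$-Lipschitz ($L>0$), and assume $0\in\sum_{i=1}^nA_i(z)+B(z)$ has a solution. Fix a total number of iterations $K\ge1$ and a constant $C_f>0$, and run Algorithm SPS (described in the context) for $k=1,\dots,K$ with $\tau>0$, an initial point $p^1=(z^1,w_1^1,\dots,w_{n+1}^1)$ with $\sum_{i=1}^{n+1}w_i^1=0$, and constant stepsizes $$\rho_k=\rho:=\min\Big\{K^{-1/4},\frac{1}{2L}\Big\},\qquad \alpha_k=C_f\rho^2,\qquad k=1,\dots,K.$$ Suppose that almost surely for every $k$, $\mathbb{E}[\epsilon^k\mid\mathcal{F}_k]=0$, $\mathbb{E}[e^k\mid\mathcal{F}_k]=0$, $\mathbb{E}[\|\epsilon^k\|^2\mid\mathcal{F}_k]\le N_1+N_2\|B(z^k)\|^2$ and $\mathbb{E}[\|e^k\|^2\mid\mathcal{F}_k,\mathcal{E}_k]\le N_3+N_4\|B(x_{n+1}^k)\|^2$ for constants $0\le N_1,\dots,N_4<\infty$. Define $$O_k=\sum_{i=1}^n\|y_i^k-w_i^k\|^2+\sum_{i=1}^n\|z^k-x_i^k\|^2+\|B(z^k)-w_{n+1}^k\|^2.$$ Then $$\frac1K\sum_{j=1}^K\mathbb{E}[O_j]=O(K^{-1/4}),$$ where the constant hidden in $O(\cdot)$ does not depend on $K$ (it depends only on $n,\tau,L,N_1,\dots,N_4,C_f$,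 the initial point $p^1$, and the problem data).
   Context: For maximal monotone $A$ and $\tau>0$, $J_{\tau A}=(I+\tau A)^{-1}$ (single-valued, domain $\mathbb{R}^d$). Algorithm SPS: given $p^k=(z^k,w_1^k,\dots,w_{n+1}^k)$, for $i=1,\dots,n$ set $t_i^k=z^k+\tau w_i^k$, $x_i^k=J_{\tau A_i}(t_i^k)$, $y_i^k=\tau^{-1}(t_i^k-x_i^k)$; then $r^k=B(z^k)+\epsilon^k$, $x_{n+1}^k=z^k-\rho_k(r^k-w_{n+1}^k)$, $y_{n+1}^k=B(x_{n+1}^k)+e^k$, where $\epsilon^k,e^k$ are $\mathbb{R}^d$-valued random noise variables on a probability space; finally $z^{k+1}=z^k-\alpha_k\sum_{i=1}^{n+1}y_i^k$ and $w_i^{k+1}=w_i^k-\alpha_k(x_i^k-\frac1{n+1}\sum_{j=1}^{n+1}x_j^k)$, $i=1,\dots,n+1$. $\mathcal{F}_k=\sigma(p^1,\dots,p^k)$, $\mathcal{E}_k=\sigma(\epsilon^k)$. *)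

theory Defs
  imports "HOL-Probability.Probability"
begin

definition monotone_op :: "('a::real_inner \<Rightarrow> 'a set) \<Rightarrow> bool" where
  "monotone_op A \<longleftrightarrow> (\<forall>x y u v. u \<in> A x \<longrightarrow> v \<in> A y \<longrightarrow> 0 \<le> (u - v) \<bullet> (x - y))"

definition maximal_monotone :: "('a::real_inner \<Rightarrow> 'a set) \<Rightarrow> bool" where
  "maximal_monotone A \<longleftrightarrow> monotone_op A \<and>
     (\<forall>A'. monotone_op A' \<and> (\<forall>x. A x \<subseteq> A' x) \<longrightarrow> A' = A)"

definition monotone_fun :: "('a::real_inner \<Rightarrow> 'a) \<Rightarrow> bool" where
  "monotone_fun B \<longleftrightarrow> (\<forall>x y. 0 \<le> (B x - B y) \<bullet> (x - y))"

text \<open>Resolvent J_{tau A} = (I + tau A)^{-1}: the unique x with t in x + tau A x.\<close>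
definition resolvent :: "real \<Rightarrow> ('a::real_inner \<Rightarrow> 'a set) \<Rightarrow> 'a \<Rightarrow> 'a" where
  "resolvent \<tau> A t = (THE x. (1 / \<tau>) *\<^sub>R (t - x) \<in> A x)"

text \<open>One iteration of SPS. Indices i = 1..n are the operators A_i, index n+1 is B.
  Arguments: current z, w (w i for i = 1..n+1), noise values eps (= epsilon^k), ee (= e^k).\<close>

definition sps_x :: "nat \<Rightarrow> (nat \<Rightarrow> 'a \<Rightarrow> 'a set) \<Rightarrow> ('a \<Rightarrow> 'a) \<Rightarrow> real \<Rightarrow> real
    \<Rightarrow> 'a::real_inner \<Rightarrow> (nat \<Rightarrow> 'a) \<Rightarrow> 'a \<Rightarrow> nat \<Rightarrow> 'a" where
  "sps_x n A B \<tau> \<rho> z w eps i =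
     (if i \<le> n then resolvent \<tau> (A i) (z + \<tau> *\<^sub>R w i)
      else z - \<rho> *\<^sub>R ((B z + eps) - w (n + 1)))"

definition sps_y :: "nat \<Rightarrow> (nat \<Rightarrow> 'a \<Rightarrow> 'a set) \<Rightarrow> ('a \<Rightarrow> 'a) \<Rightarrow> real \<Rightarrow> real
    \<Rightarrow> 'a::real_inner \<Rightarrow> (nat \<Rightarrow> 'a) \<Rightarrow> 'a \<Rightarrow> 'a \<Rightarrow> nat \<Rightarrow> 'a" where
  "sps_y n A B \<tau> \<rho> z w eps ee i =
     (if i \<le> n then (1 / \<tau>) *\<^sub>R ((z + \<tau> *\<^sub>R w i) - sps_x n A B \<tau> \<rho> z w eps i)
      else B (sps_x n A B \<tau> \<rho> z w eps (n + 1)) + ee)"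

definition sps_step :: "nat \<Rightarrow> (nat \<Rightarrow> 'a \<Rightarrow> 'a set) \<Rightarrow> ('a \<Rightarrow> 'a) \<Rightarrow> real \<Rightarrow> real \<Rightarrow> real
    \<Rightarrow> 'a::real_inner \<Rightarrow> (nat \<Rightarrow> 'a) \<Rightarrow> 'a \<Rightarrow> 'a \<Rightarrow> 'a \<times> (nat \<Rightarrow> 'a)" where
  "sps_step n A B \<tau> \<rho> \<alpha> z w eps ee =
     (z - \<alpha> *\<^sub>R (\<Sum>i=1..n+1. sps_y n A B \<tau> \<rho> z w eps ee i),
      \<lambda>i. w i - \<alpha> *\<^sub>R (sps_x n A B \<tau> \<rho> z w eps i
              - (1 / real (n + 1)) *\<^sub>R (\<Sum>j=1..n+1. sps_x n A B \<tau> \<rho> z w eps j)))"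

text \<open>sps_aux j = p^{j+1}; the noise sequences are indexed from 1 as in the paper.\<close>
primrec sps_aux :: "nat \<Rightarrow> (nat \<Rightarrow> 'a \<Rightarrow> 'a set) \<Rightarrow> ('a \<Rightarrow> 'a) \<Rightarrow> real \<Rightarrow> real \<Rightarrow> real
    \<Rightarrow> 'a::real_inner \<Rightarrow> (nat \<Rightarrow> 'a) \<Rightarrow> (nat \<Rightarrow> 'a) \<Rightarrow> (nat \<Rightarrow> 'a) \<Rightarrow> nat \<Rightarrow> 'a \<times> (nat \<Rightarrow> 'a)" where
  "sps_aux n A B \<tau> \<rho> \<alpha> z1 w1 eps ee 0 = (z1, w1)"
| "sps_aux n A B \<tau> \<rho> \<alpha> z1 w1 eps ee (Suc j) =
     (case sps_aux n A B \<tau> \<rho> \<alpha> z1 w1 eps ee j of (z, w) \<Rightarrow>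
        sps_step n A B \<tau> \<rho> \<alpha> z w (eps (Suc j)) (ee (Suc j)))"

definition sps_state where
  "sps_state n A B \<tau> \<rho> \<alpha> z1 w1 eps ee k = sps_aux n A B \<tau> \<rho> \<alpha> z1 w1 eps ee (k - 1)"

definition sps_z where
  "sps_z n A B \<tau> \<rho> \<alpha> z1 w1 \<epsilon> e k = (\<lambda>\<omega>. fst (sps_state n A B \<tau> \<rho> \<alpha> z1 w1 (\<lambda>j. \<epsilon> j \<omega>) (\<lambda>j. e j \<omega>) k))"

definition sps_w where
  "sps_w n A B \<tau> \<rho> \<alpha> z1 w1 \<epsilon> e k = (\<lambda>\<omega>. snd (sps_state n A B \<tau> \<rho> \<alpha> z1 w1 (\<lambda>j. \<epsilon> j \<omega>) (\<lambda>j. e j \<omega>) k))"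

definition sigma_gen :: "'m measure \<Rightarrow> ('m \<Rightarrow> 'a::topological_space) set \<Rightarrow> 'm measure" where
  "sigma_gen M Fs = sigma (space M) {f -` U \<inter> space M | f U. f \<in> Fs \<and> open U}"

definition sps_F where
  "sps_F M n A B \<tau> \<rho> \<alpha> z1 w1 \<epsilon> e k = sigma_gen M
     ({sps_z n A B \<tau> \<rho> \<alpha> z1 w1 \<epsilon> e j | j. 1 \<le> j \<and> j \<le> k} \<union>
      {(\<lambda>\<omega>. sps_w n A B \<tau> \<rho> \<alpha> z1 w1 \<epsilon> e j \<omega> i) | j i. 1 \<le> j \<and> j \<le> k \<and> 1 \<le> i \<and> i \<le> n + 1})"

definition sps_FE where
  "sps_FE M n A B \<tau> \<rho> \<alpha> z1 w1 \<epsilon> e k = sigma_gen M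
     ({sps_z n A B \<tau> \<rho> \<alpha> z1 w1 \<epsilon> e j | j. 1 \<le> j \<and> j \<le> k} \<union>
      {(\<lambda>\<omega>. sps_w n A B \<tau> \<rho> \<alpha> z1 w1 \<epsilon> e j \<omega> i) | j i. 1 \<le> j \<and> j \<le> k \<and> 1 \<le> i \<and> i \<le> n + 1}
      \<union> {\<epsilon> k})"

definition sps_O where
  "sps_O n A B \<tau> \<rho> \<alpha> z1 w1 \<epsilon> e k = (\<lambda>\<omega>.
     let z = sps_z n A B \<tau> \<rho> \<alpha> z1 w1 \<epsilon> e k \<omega>; w = sps_w n A B \<tau> \<rho> \<alpha> z1 w1 \<epsilon> e k \<omega> in
     (\<Sum>i=1..n. (norm (sps_y n A B \<tau> \<rho> z w (\<epsilon> k \<omega>) (e k \<omega>) i - w i))\<^sup>2)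
     + (\<Sum>i=1..n. (norm (z - sps_x n A B \<tau> \<rho> z w (\<epsilon> k \<omega>) i))\<^sup>2)
     + (norm (B z - w (n + 1)))\<^sup>2)"

end

theory Submission
  imports Defs
begin

(* Fix a solution zs with ws_i in A_i zs for i <= n, ws_(n+1) = B zs and sum_i ws_i = 0, and let
   V(z, w) = |z - zs|^2 + sum_i |w_i - ws_i|^2.  An SPS step moves p^k = (z^k, w^k) by -alpha
   times the gradient of the separating hyperplane function phi_k, and monotonicity of the A_i
   and of B gives phi_k(z^k, w^k) - phi_k(zs, ws) >= c rho O_k, up to noise terms that are
   either linear (centred given F_k, hence of zero mean) or of order rho^2.  With
   alpha = C_f rho^2, the second moment bounds on the noise and rho^4 <= 1/K this yields
     E V_(k+1) + 2 c C_f rho^3 E O_k <= (1 + P/K) E V_k + Q/K,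
   and telescoping with (1 + P/K)^K <= e^P gives sum_k E O_k <= const / rho^3 <= const K^(3/4).
   That the resolvents are single-valued and defined everywhere is Minty's theorem, which
   follows from Brouwer's fixed point theorem and compactness. *)

section \<open>Maximal monotone operators and Minty's theorem\<close>

lemma monotone_opD:
  assumes "monotone_op A" "u \<in> A x" "v \<in> A y"
  shows "0 \<le> (u - v) \<bullet> (x - y)"
  using assms unfolding monotone_op_def by blast

lemma maximal_monotone_imp_monotone_op: "maximal_monotone A \<Longrightarrow> monotone_op A"
  unfolding maximal_monotone_def by simp

lemma maximal_monotone_memI:
  fixes A :: "'a::real_inner \<Rightarrow> 'a set"
  assumes mm: "maximal_monotone A"
    and related: "\<And>a b. b \<in> A a \<Longrightarrow> 0 \<le> (b - v) \<bullet> (a - x)"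
  shows "v \<in> A x"
proof -
  define A' where "A' = (\<lambda>y. if y = x then insert v (A y) else A y)"
  have "monotone_op A'"
    unfolding monotone_op_def
  proof (intro allI impI)
    fix y1 y2 u1 u2 assume u1: "u1 \<in> A' y1" and u2: "u2 \<in> A' y2"
    have "u1 \<in> A y1 \<or> y1 = x \<and> u1 = v" "u2 \<in> A y2 \<or> y2 = x \<and> u2 = v"
      using u1 u2 unfolding A'_def by (auto split: if_splits)
    then consider "u1 \<in> A y1" "u2 \<in> A y2" | "y1 = x" "u1 = v" "u2 \<in> A y2"
      | "u1 \<in> A y1" "y2 = x" "u2 = v" | "y1 = x" "u1 = v" "y2 = x" "u2 = v"
      by argo
    then show "0 \<le> (u1 - u2) \<bullet> (y1 - y2)"
    proof cases
      case 1
      then show ?thesis by (rule monotone_opD[OF maximal_monotone_imp_monotone_op[OF mm]])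
    next
      case 2
      have "(v - u2) \<bullet> (x - y2) = (u2 - v) \<bullet> (y2 - x)"
        by (metis inner_minus_left inner_minus_right minus_diff_eq)
      then show ?thesis using related[of u2 y2] 2 by simp
    next
      case 3
      then show ?thesis using related[of u1 y1] by simp
    qed simp
  qed
  moreover have "\<forall>y. A y \<subseteq> A' y" unfolding A'_def by auto
  ultimately have "A' = A" using mm unfolding maximal_monotone_def by blast
  moreover have "v \<in> A' x" unfolding A'_def by simp
  ultimately show ?thesis by simp
qed

lemma maximal_monotone_graph_nonempty:
  fixes A :: "'a::real_inner \<Rightarrow> 'a set"
  assumes "maximal_monotone A"
  shows "\<exists>x v. v \<in> A x"
proof (rule ccontr)
  assume empty: "\<not> ?thesis"
  then have "0 \<in> A 0" by (intro maximal_monotone_memI[OF assms]) auto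
  then show False using empty by blast
qed

lemma inner_nonneg_set_eq_cball:
  fixes a c :: "'a::real_inner"
  shows "{x. 0 \<le> (c + x) \<bullet> (a - x)} = cball ((1/2) *\<^sub>R (a - c)) (norm ((1/2) *\<^sub>R (a + c)))"
proof -
  have "(c + x) \<bullet> (a - x) = (norm ((1/2) *\<^sub>R (a + c)))\<^sup>2 - (dist ((1/2) *\<^sub>R (a - c)) x)\<^sup>2" for x
    by (simp add: dist_norm power2_norm_eq_inner inner_add_left inner_add_right inner_diff_left
        inner_diff_right inner_commute algebra_simps)
  then show ?thesis by (auto simp: power2_le_iff_abs_le)
qed

lemma monotone_convex_combination_nonneg:
  fixes a b :: "'s \<Rightarrow> 'a::real_inner" and l :: "'s \<Rightarrow> real"
  assumes fin: "finite S"
    and mono: "\<And>s r. s \<in> S \<Longrightarrow> r \<in> S \<Longrightarrow> 0 \<le> (b s - b r) \<bullet> (a s - a r)"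
    and l: "\<And>s. 0 \<le> l s" "(\<Sum>s\<in>S. l s) = 1" and x: "x = (\<Sum>s\<in>S. l s *\<^sub>R a s)"
  shows "0 \<le> (\<Sum>s\<in>S. l s * (b s \<bullet> (a s - x)))"
proof -
  define Q where "Q = (\<Sum>s\<in>S. \<Sum>r\<in>S. l s * l r * (b s \<bullet> (a s - a r)))"
  have "a s - x = (\<Sum>r\<in>S. l r *\<^sub>R (a s - a r))" for s
    using l(2) x by (simp add: scaleR_diff_right sum_subtractf scaleR_sum_left[symmetric])
  then have "(\<Sum>s\<in>S. l s * (b s \<bullet> (a s - x))) = Q"
    unfolding Q_def by (simp add: inner_sum_right sum_distrib_left mult.assoc)
  moreover have Q_swap: "Q = (\<Sum>s\<in>S. \<Sum>r\<in>S. l s * l r * (b r \<bullet> (a r - a s)))"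
    unfolding Q_def by (subst sum.swap) (simp add: mult.commute)
  have "2 * Q = (\<Sum>s\<in>S. \<Sum>r\<in>S. l s * l r * (b s \<bullet> (a s - a r)) + l s * l r * (b r \<bullet> (a r - a s)))"
    using Q_swap unfolding Q_def by (simp add: sum.distrib)
  also have "\<dots> = (\<Sum>s\<in>S. \<Sum>r\<in>S. l s * l r * ((b s - b r) \<bullet> (a s - a r)))"
    by (intro sum.cong refl) (simp add: inner_diff_left inner_diff_right algebra_simps)
  also have "\<dots> \<ge> 0" by (intro sum_nonneg mult_nonneg_nonneg mono l(1))
  ultimately show ?thesis by simp
qed

lemma sum_pos_of_ex_pos:
  fixes f :: "'s \<Rightarrow> real"
  assumes "finite S" "\<And>s. 0 \<le> f s" "\<exists>s\<in>S. 0 < f s"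
  shows "0 < (\<Sum>s\<in>S. f s)"
proof -
  obtain s where "s \<in> S" "0 < f s" using assms(3) by blast
  moreover have "f s \<le> (\<Sum>s\<in>S. f s)" using assms(1,2) \<open>s \<in> S\<close> by (intro member_le_sum) auto
  ultimately show ?thesis by linarith
qed

lemma brouwer_convex_combination_fixed_point:
  fixes a :: "'s \<Rightarrow> 'a::euclidean_space" and h :: "'s \<Rightarrow> 'a \<Rightarrow> real"
  assumes fin: "finite S" and cont: "\<And>s. continuous_on UNIV (h s)"
    and h_nonneg: "\<And>s x. 0 \<le> h s x" and h_pos: "\<And>x. \<exists>s\<in>S. 0 < h s x"
  obtains x where "x = (\<Sum>s\<in>S. (h s x / (\<Sum>r\<in>S. h r x)) *\<^sub>R a s)"
proof -
  define D where "D x = (\<Sum>r\<in>S. h r x)" for x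
  have D_pos: "0 < D x" for x unfolding D_def by (rule sum_pos_of_ex_pos[OF fin h_nonneg h_pos])
  have cont_D: "continuous_on UNIV D"
    unfolding D_def using cont by (intro continuous_on_sum) auto
  define f where "f x = (\<Sum>s\<in>S. (h s x / D x) *\<^sub>R a s)" for x
  define C where "C = convex hull (a ` S)"
  have "continuous_on C f"
    unfolding f_def using D_pos
    by (intro continuous_intros continuous_on_subset[OF cont] continuous_on_subset[OF cont_D])
      (auto simp: less_le)
  moreover have "f \<in> C \<rightarrow> C"
  proof
    fix x
    show "f x \<in> C" unfolding f_def C_def
    proof (rule convex_sum[OF fin convex_convex_hull])
      show "(\<Sum>s\<in>S. h s x / D x) = 1"
        using D_pos[of x] by (simp add: sum_divide_distrib[symmetric] D_def)
      show "0 \<le> h s x / D x" for s using h_nonneg D_pos[of x] by simp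
      show "a s \<in> convex hull (a ` S)" if "s \<in> S" for s using that by (simp add: hull_inc)
    qed
  qed
  moreover have "compact C" "convex C" "C \<noteq> {}"
    unfolding C_def using fin h_pos by (auto simp: finite_imp_compact_convex_hull)
  ultimately obtain x where "f x = x" using brouwer by blast
  then have "x = (\<Sum>s\<in>S. (h s x / (\<Sum>r\<in>S. h r x)) *\<^sub>R a s)" unfolding f_def D_def by (rule sym)
  then show ?thesis by (rule that)
qed

lemma brouwer_negative_convex_combination:
  fixes a :: "'s \<Rightarrow> 'a::euclidean_space" and g :: "'s \<Rightarrow> 'a \<Rightarrow> real"
  assumes fin: "finite S" and cont: "\<And>s. continuous_on UNIV (g s)"
    and neg: "\<And>x. \<exists>s\<in>S. g s x < 0"
  obtains l x where "\<And>s. 0 \<le> l s" "(\<Sum>s\<in>S. l s) = 1" "x = (\<Sum>s\<in>S. l s *\<^sub>R a s)"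
    "(\<Sum>s\<in>S. l s * g s x) < 0"
proof -
  define h where "h = (\<lambda>s x. max 0 (- g s x))"
  have h_nonneg: "0 \<le> h s x" for s x unfolding h_def by simp
  have h_pos: "\<exists>s\<in>S. 0 < h s x" for x using neg[of x] unfolding h_def by force
  have "continuous_on UNIV (h s)" for s unfolding h_def using cont[of s] by (intro continuous_intros)
  then obtain x where x: "x = (\<Sum>s\<in>S. (h s x / (\<Sum>r\<in>S. h r x)) *\<^sub>R a s)"
    by (rule brouwer_convex_combination_fixed_point[OF fin _ h_nonneg h_pos])
  define D where "D = (\<Sum>r\<in>S. h r x)"
  have D_pos: "0 < D" unfolding D_def by (rule sum_pos_of_ex_pos[OF fin h_nonneg h_pos])
  show ?thesis
  proof
    show "0 \<le> h s x / D" for s using h_nonneg D_pos by simp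
    show "(\<Sum>s\<in>S. h s x / D) = 1" using D_pos by (simp add: sum_divide_distrib[symmetric] D_def)
    show "x = (\<Sum>s\<in>S. (h s x / D) *\<^sub>R a s)" using x unfolding D_def .
    \<comment> \<open>the weights live where \<open>g\<close> is negative, so the weighted sum is \<open>-\<Sum>h\<^sup>2 / D\<close>\<close>
    have "h s x * g s x = - (h s x)\<^sup>2" for s
      unfolding h_def by (cases "g s x \<le> 0") (auto simp: power2_eq_square max_def)
    then have "(\<Sum>s\<in>S. h s x / D * g s x) = - (\<Sum>s\<in>S. (h s x)\<^sup>2) / D"
      by (simp add: sum_divide_distrib[symmetric] sum_negf)
    moreover have "0 < (\<Sum>s\<in>S. (h s x)\<^sup>2)"
      using h_pos[of x] by (intro sum_pos_of_ex_pos[OF fin]) force+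
    ultimately show "(\<Sum>s\<in>S. h s x / D * g s x) < 0" using D_pos by (simp add: divide_neg_pos)
  qed
qed

lemma finite_monotone_minty_point:
  fixes S :: "('a::euclidean_space \<times> 'a) set"
  assumes fin: "finite S" and tau: "0 < \<tau>"
    and mono: "\<And>a b c d. (a, b) \<in> S \<Longrightarrow> (c, d) \<in> S \<Longrightarrow> 0 \<le> (b - d) \<bullet> (a - c)"
  shows "\<exists>x. \<forall>(a, b)\<in>S. 0 \<le> (\<tau> *\<^sub>R b - t + x) \<bullet> (a - x)"
proof (rule ccontr)
  define g where "g = (\<lambda>s x. (\<tau> *\<^sub>R snd s - t + x) \<bullet> (fst s - x))"
  assume "\<not> ?thesis"
  then have "\<exists>s\<in>S. g s x < 0" for x unfolding g_def by (force simp: not_le)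
  moreover have "continuous_on UNIV (g s)" for s unfolding g_def by (intro continuous_intros)
  ultimately obtain l x where l: "\<And>s. 0 \<le> l s" "(\<Sum>s\<in>S. l s) = 1"
    and x: "x = (\<Sum>s\<in>S. l s *\<^sub>R fst s)" and neg: "(\<Sum>s\<in>S. l s * g s x) < 0"
    using brouwer_negative_convex_combination[OF fin, of g fst] by blast
  have "(\<Sum>s\<in>S. l s * g s x)
      = \<tau> * (\<Sum>s\<in>S. l s * (snd s \<bullet> (fst s - x)))
        + (x - t) \<bullet> ((\<Sum>s\<in>S. l s *\<^sub>R fst s) - (\<Sum>s\<in>S. l s) *\<^sub>R x)"
    unfolding g_def
    by (simp add: inner_add_left inner_diff_right inner_sum_right sum_distrib_left
        sum.distrib algebra_simps sum_subtractf scaleR_sum_left)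
  also have "\<dots> = \<tau> * (\<Sum>s\<in>S. l s * (snd s \<bullet> (fst s - x)))"
    using l(2) x by simp
  finally have "(\<Sum>s\<in>S. l s * g s x) = \<tau> * (\<Sum>s\<in>S. l s * (snd s \<bullet> (fst s - x)))" .
  moreover have "0 \<le> (\<Sum>s\<in>S. l s * (snd s \<bullet> (fst s - x)))"
    by (rule monotone_convex_combination_nonneg[OF fin _ l x]) (use mono in force)
  ultimately show False using neg tau by (auto simp: mult_less_0_iff)
qed

(* The Minty inequalities against a single pair of the graph cut out a ball; any finitely many
   of these balls intersect by finite_monotone_minty_point, hence all of them do. *)
theorem minty_surjective:
  fixes A :: "'a::euclidean_space \<Rightarrow> 'a set"
  assumes mm: "maximal_monotone A" and tau: "0 < \<tau>"
  shows "\<exists>x. (1 / \<tau>) *\<^sub>R (t - x) \<in> A x"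
proof -
  define C where "C = (\<lambda>(a, b). {x. 0 \<le> (\<tau> *\<^sub>R b - t + x) \<bullet> (a - x)})"
  define G where "G = {(a, b). b \<in> A a}"
  obtain p0 where p0: "p0 \<in> G" using maximal_monotone_graph_nonempty[OF mm] unfolding G_def by auto
  have compact_C: "compact (C p)" for p
    unfolding C_def by (simp add: inner_nonneg_set_eq_cball split: prod.splits)
  have "C p0 \<inter> (\<Inter>p\<in>G. C p) \<noteq> {}"
  proof (rule compact_imp_fip_image[OF compact_C compact_imp_closed[OF compact_C]])
    fix I assume I: "finite I" "I \<subseteq> G"
    have "\<exists>x. \<forall>(a, b)\<in>insert p0 I. 0 \<le> (\<tau> *\<^sub>R b - t + x) \<bullet> (a - x)"
    proof (rule finite_monotone_minty_point[OF _ tau])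
      fix a b c d assume "(a, b) \<in> insert p0 I" "(c, d) \<in> insert p0 I"
      then have "b \<in> A a" "d \<in> A c" using I p0 unfolding G_def by auto
      then show "0 \<le> (b - d) \<bullet> (a - c)"
        by (rule monotone_opD[OF maximal_monotone_imp_monotone_op[OF mm]])
    qed (use I in simp)
    then show "C p0 \<inter> (\<Inter>p\<in>I. C p) \<noteq> {}" unfolding C_def by fastforce
  qed
  then obtain x where x: "\<And>a b. b \<in> A a \<Longrightarrow> 0 \<le> (\<tau> *\<^sub>R b - t + x) \<bullet> (a - x)"
    unfolding C_def G_def by fastforce
  have "(1 / \<tau>) *\<^sub>R (t - x) \<in> A x"
  proof (rule maximal_monotone_memI[OF mm])
    fix a b assume "b \<in> A a"
    have "b - (1 / \<tau>) *\<^sub>R (t - x) = (1 / \<tau>) *\<^sub>R (\<tau> *\<^sub>R b - t + x)"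
      using tau by (simp add: algebra_simps)
    then show "0 \<le> (b - (1 / \<tau>) *\<^sub>R (t - x)) \<bullet> (a - x)" using x[OF \<open>b \<in> A a\<close>] tau by simp
  qed
  then show ?thesis ..
qed

lemma resolvent_unique:
  fixes A :: "'a::real_inner \<Rightarrow> 'a set"
  assumes mono: "monotone_op A" and tau: "0 < \<tau>"
    and x: "(1 / \<tau>) *\<^sub>R (t - x) \<in> A x" and y: "(1 / \<tau>) *\<^sub>R (t - y) \<in> A y"
  shows "x = y"
proof -
  have "0 \<le> ((1 / \<tau>) *\<^sub>R (t - x) - (1 / \<tau>) *\<^sub>R (t - y)) \<bullet> (x - y)"
    using monotone_opD[OF mono x y] .
  also have "\<dots> = - (1 / \<tau>) * ((x - y) \<bullet> (x - y))"
    by (simp add: algebra_simps)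
  finally have "(x - y) \<bullet> (x - y) \<le> 0" using tau by (simp add: divide_le_0_iff)
  then show ?thesis by (metis inner_gt_zero_iff not_le right_minus_eq)
qed

lemma resolvent_eqI:
  fixes A :: "'a::real_inner \<Rightarrow> 'a set"
  assumes "monotone_op A" "0 < \<tau>" "(1 / \<tau>) *\<^sub>R (t - x) \<in> A x"
  shows "resolvent \<tau> A t = x"
  unfolding resolvent_def using assms resolvent_unique by blast

lemma resolvent_mem:
  fixes A :: "'a::euclidean_space \<Rightarrow> 'a set"
  assumes mm: "maximal_monotone A" and tau: "0 < \<tau>"
  shows "(1 / \<tau>) *\<^sub>R (t - resolvent \<tau> A t) \<in> A (resolvent \<tau> A t)"
proof -
  obtain x where x: "(1 / \<tau>) *\<^sub>R (t - x) \<in> A x" using minty_surjective[OF mm tau] by blast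
  then show ?thesis
    using resolvent_eqI[OF maximal_monotone_imp_monotone_op[OF mm] tau x] by simp
qed

lemma resolvent_nonexpansive:
  fixes A :: "'a::euclidean_space \<Rightarrow> 'a set"
  assumes mm: "maximal_monotone A" and tau: "0 < \<tau>"
  shows "norm (resolvent \<tau> A t - resolvent \<tau> A s) \<le> norm (t - s)"
proof -
  define x y where "x = resolvent \<tau> A t" and "y = resolvent \<tau> A s"
  have "0 \<le> ((1 / \<tau>) *\<^sub>R (t - x) - (1 / \<tau>) *\<^sub>R (s - y)) \<bullet> (x - y)"
    unfolding x_def y_def
    by (rule monotone_opD[OF maximal_monotone_imp_monotone_op[OF mm]
          resolvent_mem[OF mm tau] resolvent_mem[OF mm tau]])
  also have "\<dots> = (1 / \<tau>) * (((t - s) - (x - y)) \<bullet> (x - y))"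
    by (simp add: algebra_simps)
  finally have "(norm (x - y))\<^sup>2 \<le> (t - s) \<bullet> (x - y)"
    using tau by (simp add: zero_le_divide_iff inner_diff_left power2_norm_eq_inner)
  also have "\<dots> \<le> norm (t - s) * norm (x - y)" by (rule norm_cauchy_schwarz)
  finally show ?thesis unfolding x_def y_def
    by (metis mult_le_cancel_right norm_ge_zero power2_eq_square not_le order.trans)
qed

lemma continuous_on_resolvent:
  fixes A :: "'a::euclidean_space \<Rightarrow> 'a set"
  assumes "maximal_monotone A" "0 < \<tau>"
  shows "continuous_on UNIV (resolvent \<tau> A)"
proof -
  have "1-lipschitz_on UNIV (resolvent \<tau> A)"
    by (rule lipschitz_onI) (use resolvent_nonexpansive[OF assms] in \<open>auto simp: dist_norm\<close>)
  then show ?thesis by (rule lipschitz_on_continuous_on)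
qed

section \<open>One step of SPS\<close>

definition sps_lyapunov :: "nat \<Rightarrow> 'a::real_inner \<Rightarrow> (nat \<Rightarrow> 'a) \<Rightarrow> 'a \<Rightarrow> (nat \<Rightarrow> 'a) \<Rightarrow> real" where
  "sps_lyapunov n zs ws z w = (norm (z - zs))\<^sup>2 + (\<Sum>i=1..n+1. (norm (w i - ws i))\<^sup>2)"

(* The separating hyperplane function of projective splitting for the step taken at (z, w),
   evaluated at (z', w'). *)
definition sps_phi :: "nat \<Rightarrow> (nat \<Rightarrow> 'a \<Rightarrow> 'a set) \<Rightarrow> ('a \<Rightarrow> 'a) \<Rightarrow> real \<Rightarrow> real
    \<Rightarrow> 'a::real_inner \<Rightarrow> (nat \<Rightarrow> 'a) \<Rightarrow> 'a \<Rightarrow> 'a \<Rightarrow> 'a \<Rightarrow> (nat \<Rightarrow> 'a) \<Rightarrow> real" where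
  "sps_phi n A B \<tau> \<rho> z w eps ee z' w' =
     (\<Sum>i=1..n+1. (z' - sps_x n A B \<tau> \<rho> z w eps i) \<bullet> (sps_y n A B \<tau> \<rho> z w eps ee i - w' i))"

(* |p^(k+1) - p^k|^2 / alpha^2 for the step taken at p^k = (z, w). *)
definition sps_update_sqnorm :: "nat \<Rightarrow> (nat \<Rightarrow> 'a \<Rightarrow> 'a set) \<Rightarrow> ('a \<Rightarrow> 'a) \<Rightarrow> real \<Rightarrow> real
    \<Rightarrow> 'a::real_inner \<Rightarrow> (nat \<Rightarrow> 'a) \<Rightarrow> 'a \<Rightarrow> 'a \<Rightarrow> real" where
  "sps_update_sqnorm n A B \<tau> \<rho> z w eps ee =
     (norm (\<Sum>i=1..n+1. sps_y n A B \<tau> \<rho> z w eps ee i))\<^sup>2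
     + (\<Sum>i=1..n+1. (norm (sps_x n A B \<tau> \<rho> z w eps i
          - (1 / real (n + 1)) *\<^sub>R (\<Sum>j=1..n+1. sps_x n A B \<tau> \<rho> z w eps j)))\<^sup>2)"

(* O_k as a function of (z^k, w^k) and the noise; sps_O is this evaluated along the iterates. *)
definition sps_residual :: "nat \<Rightarrow> (nat \<Rightarrow> 'a \<Rightarrow> 'a set) \<Rightarrow> ('a \<Rightarrow> 'a) \<Rightarrow> real \<Rightarrow> real
    \<Rightarrow> 'a::real_inner \<Rightarrow> (nat \<Rightarrow> 'a) \<Rightarrow> 'a \<Rightarrow> 'a \<Rightarrow> real" where
  "sps_residual n A B \<tau> \<rho> z w eps ee =
     (\<Sum>i=1..n. (norm (sps_y n A B \<tau> \<rho> z w eps ee i - w i))\<^sup>2)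
     + (\<Sum>i=1..n. (norm (z - sps_x n A B \<tau> \<rho> z w eps i))\<^sup>2)
     + (norm (B z - w (n + 1)))\<^sup>2"

lemma sps_lyapunov_ge:
  shows "0 \<le> sps_lyapunov n zs ws z w"
    and "(norm (z - zs))\<^sup>2 \<le> sps_lyapunov n zs ws z w"
    and "i \<in> {1..n+1} \<Longrightarrow> (norm (w i - ws i))\<^sup>2 \<le> sps_lyapunov n zs ws z w"
proof -
  have "0 \<le> (\<Sum>i=1..n+1. (norm (w i - ws i))\<^sup>2)" by (intro sum_nonneg) auto
  then show "0 \<le> sps_lyapunov n zs ws z w" "(norm (z - zs))\<^sup>2 \<le> sps_lyapunov n zs ws z w"
    unfolding sps_lyapunov_def by simp_all
  assume "i \<in> {1..n+1}"
  then have "(norm (w i - ws i))\<^sup>2 \<le> (\<Sum>i=1..n+1. (norm (w i - ws i))\<^sup>2)"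
    by (intro member_le_sum) auto
  then show "(norm (w i - ws i))\<^sup>2 \<le> sps_lyapunov n zs ws z w"
    unfolding sps_lyapunov_def using zero_le_power2[of "norm (z - zs)"] by linarith
qed

lemma sqrt_sps_lyapunov_bounds:
  fixes n :: nat and z zs eps :: "'a::real_inner" and w ws :: "nat \<Rightarrow> 'a" and s :: real
  assumes s: "0 \<le> s"
  defines "R \<equiv> sqrt (sps_lyapunov n zs ws z w + (norm eps)\<^sup>2 + s)"
  shows "norm (z - zs) \<le> R" and "\<And>i. i \<in> {1..n+1} \<Longrightarrow> norm (w i - ws i) \<le> R"
    and "norm eps \<le> R" and "sqrt s \<le> R" and "R\<^sup>2 = sps_lyapunov n zs ws z w + (norm eps)\<^sup>2 + s"
proof -
  note nonneg = sps_lyapunov_ge(1)[of n zs ws z w] zero_le_power2[of "norm eps"] s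
  show "norm (z - zs) \<le> R" unfolding R_def
    using sps_lyapunov_ge(2)[of z zs n ws w] nonneg by (intro real_le_rsqrt) linarith
  show "norm (w i - ws i) \<le> R" if "i \<in> {1..n+1}" for i unfolding R_def
    using sps_lyapunov_ge(3)[OF that, of w ws zs z] nonneg by (intro real_le_rsqrt) linarith
  show "norm eps \<le> R" unfolding R_def using nonneg by (intro real_le_rsqrt) linarith
  show "sqrt s \<le> R" unfolding R_def using nonneg by (intro real_sqrt_le_mono) linarith
  show "R\<^sup>2 = sps_lyapunov n zs ws z w + (norm eps)\<^sup>2 + s" unfolding R_def using nonneg by simp
qed

lemma sps_update_sqnorm_nonneg: "0 \<le> sps_update_sqnorm n A B \<tau> \<rho> z w eps ee"
  unfolding sps_update_sqnorm_def by (intro add_nonneg_nonneg sum_nonneg) auto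

lemma sps_residual_nonneg: "0 \<le> sps_residual n A B \<tau> \<rho> z w eps ee"
  unfolding sps_residual_def by (intro add_nonneg_nonneg sum_nonneg) auto

lemma power2_add_le: "((a::real) + b)\<^sup>2 \<le> 2 * a\<^sup>2 + 2 * b\<^sup>2"
  using sum_squares_bound[of a b] by (simp add: power2_sum)

lemma norm_diff_power2_le:
  fixes a b :: "'a::real_normed_vector"
  shows "(norm (a - b))\<^sup>2 \<le> 2 * (norm a)\<^sup>2 + 2 * (norm b)\<^sup>2"
proof -
  have "(norm (a - b))\<^sup>2 \<le> (norm a + norm b)\<^sup>2" by (intro power_mono norm_triangle_ineq4) auto
  also have "\<dots> \<le> 2 * (norm a)\<^sup>2 + 2 * (norm b)\<^sup>2" by (rule power2_add_le)
  finally show ?thesis .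
qed

lemma norm_diff_scaleR_power2:
  fixes a b :: "'a::real_inner"
  shows "(norm (a - \<alpha> *\<^sub>R b))\<^sup>2 = (norm a)\<^sup>2 - 2 * \<alpha> * (a \<bullet> b) + \<alpha>\<^sup>2 * (norm b)\<^sup>2"
  unfolding power2_norm_eq_inner
  by (simp add: inner_diff_left inner_diff_right inner_commute power2_eq_square algebra_simps)

lemma norm_diff_mean_le:
  fixes x :: "'i \<Rightarrow> 'a::real_normed_vector"
  assumes fin: "finite I" and ne: "I \<noteq> {}" and le: "\<And>i. i \<in> I \<Longrightarrow> norm (z - x i) \<le> c"
  shows "norm (z - (1 / real (card I)) *\<^sub>R (\<Sum>i\<in>I. x i)) \<le> c"
proof -
  have card: "0 < real (card I)" using fin ne by (simp add: card_gt_0_iff)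
  have "z - (1 / real (card I)) *\<^sub>R (\<Sum>i\<in>I. x i) = (1 / real (card I)) *\<^sub>R (\<Sum>i\<in>I. z - x i)"
    using card by (simp add: sum_subtractf scaleR_diff_right sum_constant_scaleR)
  then have "norm (z - (1 / real (card I)) *\<^sub>R (\<Sum>i\<in>I. x i)) \<le> (1 / real (card I)) * (\<Sum>i\<in>I. norm (z - x i))"
    using norm_sum[of "\<lambda>i. z - x i" I] card by (simp add: divide_right_mono)
  also have "\<dots> \<le> (1 / real (card I)) * (real (card I) * c)"
    using sum_bounded_above[of I "\<lambda>i. norm (z - x i)"] le card by (intro mult_left_mono) auto
  finally show ?thesis using card by simp
qed

lemma sps_phi_diff:
  "sps_phi n A B \<tau> \<rho> z w eps ee z w - sps_phi n A B \<tau> \<rho> z w eps ee zs ws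
   = (\<Sum>i=1..n+1. (z - sps_x n A B \<tau> \<rho> z w eps i) \<bullet> (sps_y n A B \<tau> \<rho> z w eps ee i - w i)
        + (sps_x n A B \<tau> \<rho> z w eps i - zs) \<bullet> (sps_y n A B \<tau> \<rho> z w eps ee i - ws i))"
  unfolding sps_phi_def sum_subtractf[symmetric]
  by (intro sum.cong refl) (simp add: inner_diff_left)

lemma sps_step_w_sum:
  assumes "(\<Sum>i=1..n+1. w i) = 0"
  shows "(\<Sum>i=1..n+1. snd (sps_step n A B \<tau> \<rho> \<alpha> z w eps ee) i) = 0"
proof -
  define x where "x = sps_x n A B \<tau> \<rho> z w eps"
  define xb where "xb = (1 / real (n + 1)) *\<^sub>R (\<Sum>j=1..n+1. x j)"
  have "(\<Sum>i=1..n+1. x i - xb) = 0"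
    unfolding xb_def by (simp add: sum_subtractf sum_constant_scaleR)
  then have "(\<Sum>i=1..n+1. w i - \<alpha> *\<^sub>R (x i - xb)) = 0"
    using assms by (simp add: sum_subtractf scaleR_sum_right[symmetric])
  then show ?thesis unfolding sps_step_def x_def xb_def by simp
qed

lemma sps_step_diff:
  "fst (sps_step n A B \<tau> \<rho> \<alpha> z w eps ee) - zs = (z - zs) - \<alpha> *\<^sub>R (\<Sum>i=1..n+1. sps_y n A B \<tau> \<rho> z w eps ee i)"
  "snd (sps_step n A B \<tau> \<rho> \<alpha> z w eps ee) i - ws i = (w i - ws i)
     - \<alpha> *\<^sub>R (sps_x n A B \<tau> \<rho> z w eps i - (1 / real (n + 1)) *\<^sub>R (\<Sum>j=1..n+1. sps_x n A B \<tau> \<rho> z w eps j))"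
  unfolding sps_step_def by simp_all

(* One step moves (z, w) by -\<alpha> times (\<Sum>y, x - mean x); expanding the square gives an exact
   identity, where the mean-zero sums of w and ws make the cross term a difference of
   hyperplane values. *)
lemma sps_step_lyapunov_eq:
  fixes n :: nat and A :: "nat \<Rightarrow> 'a::real_inner \<Rightarrow> 'a set" and B :: "'a \<Rightarrow> 'a" and \<tau> \<rho> \<alpha> :: real
    and z zs eps ee :: 'a and w ws :: "nat \<Rightarrow> 'a"
  assumes w_sum: "(\<Sum>i=1..n+1. w i) = 0" and ws_sum: "(\<Sum>i=1..n+1. ws i) = 0"
  defines "p' \<equiv> sps_step n A B \<tau> \<rho> \<alpha> z w eps ee"
  shows "sps_lyapunov n zs ws (fst p') (snd p')
       = sps_lyapunov n zs ws z w
         - 2 * \<alpha> * (sps_phi n A B \<tau> \<rho> z w eps ee z w - sps_phi n A B \<tau> \<rho> z w eps ee zs ws)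
         + \<alpha>\<^sup>2 * sps_update_sqnorm n A B \<tau> \<rho> z w eps ee"
proof -
  define x where "x = sps_x n A B \<tau> \<rho> z w eps"
  define y where "y = sps_y n A B \<tau> \<rho> z w eps ee"
  define xb where "xb = (1 / real (n + 1)) *\<^sub>R (\<Sum>j=1..n+1. x j)"
  define S where "S = (\<Sum>i=1..n+1. y i)"
  note z' = sps_step_diff(1)[of n A B \<tau> \<rho> \<alpha> z w eps ee zs, folded p'_def y_def S_def]
  note w' = sps_step_diff(2)[of n A B \<tau> \<rho> \<alpha> z w eps ee, folded p'_def x_def xb_def]
  have "sps_lyapunov n zs ws (fst p') (snd p')
     = sps_lyapunov n zs ws z w - 2 * \<alpha> * ((z - zs) \<bullet> S + (\<Sum>i=1..n+1. (w i - ws i) \<bullet> (x i - xb)))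
         + \<alpha>\<^sup>2 * ((norm S)\<^sup>2 + (\<Sum>i=1..n+1. (norm (x i - xb))\<^sup>2))"
    unfolding sps_lyapunov_def z' w' norm_diff_scaleR_power2
    by (simp add: sum.distrib sum_subtractf sum_distrib_left algebra_simps)
  also have "(z - zs) \<bullet> S + (\<Sum>i=1..n+1. (w i - ws i) \<bullet> (x i - xb))
      = (\<Sum>i=1..n+1. (z - x i) \<bullet> (y i - w i) + (x i - zs) \<bullet> (y i - ws i))"
  proof -
    have summand: "(z - x i) \<bullet> (y i - w i) + (x i - zs) \<bullet> (y i - ws i)
       = (z - zs) \<bullet> y i + (w i - ws i) \<bullet> (x i - xb) + xb \<bullet> w i - xb \<bullet> ws i - z \<bullet> w i + zs \<bullet> ws i"
      for i by (simp add: inner_diff_left inner_diff_right inner_commute algebra_simps)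
    have "(\<Sum>i=1..n+1. v \<bullet> w i) = 0" "(\<Sum>i=1..n+1. v \<bullet> ws i) = 0" for v
      using w_sum ws_sum by (simp_all add: inner_sum_right[symmetric])
    moreover have "(\<Sum>i=1..n+1. (z - zs) \<bullet> y i) = (z - zs) \<bullet> S"
      by (simp only: S_def inner_sum_right)
    ultimately show ?thesis unfolding summand by (simp only: sum.distrib sum_subtractf)
  qed
  finally show ?thesis
    unfolding sps_phi_diff sps_update_sqnorm_def S_def x_def y_def xb_def .
qed

lemma sps_step_lyapunov_le:
  fixes n :: nat and A :: "nat \<Rightarrow> 'a::real_inner \<Rightarrow> 'a set" and B :: "'a \<Rightarrow> 'a" and \<tau> \<rho> \<alpha> :: real
    and z zs eps ee :: 'a and w ws :: "nat \<Rightarrow> 'a"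
  defines "p' \<equiv> sps_step n A B \<tau> \<rho> \<alpha> z w eps ee"
  shows "sps_lyapunov n zs ws (fst p') (snd p')
     \<le> 2 * sps_lyapunov n zs ws z w + 2 * \<alpha>\<^sup>2 * sps_update_sqnorm n A B \<tau> \<rho> z w eps ee"
proof -
  define x where "x = sps_x n A B \<tau> \<rho> z w eps"
  define xb where "xb = (1 / real (n + 1)) *\<^sub>R (\<Sum>j=1..n+1. x j)"
  define S where "S = (\<Sum>i=1..n+1. sps_y n A B \<tau> \<rho> z w eps ee i)"
  note z' = sps_step_diff(1)[of n A B \<tau> \<rho> \<alpha> z w eps ee zs, folded p'_def S_def]
  note w' = sps_step_diff(2)[of n A B \<tau> \<rho> \<alpha> z w eps ee, folded p'_def x_def xb_def]
  have "sps_lyapunov n zs ws (fst p') (snd p')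
     \<le> (2 * (norm (z - zs))\<^sup>2 + 2 * (norm (\<alpha> *\<^sub>R S))\<^sup>2)
       + (\<Sum>i=1..n+1. 2 * (norm (w i - ws i))\<^sup>2 + 2 * (norm (\<alpha> *\<^sub>R (x i - xb)))\<^sup>2)"
    unfolding sps_lyapunov_def z' w' by (intro add_mono sum_mono norm_diff_power2_le)
  also have "\<dots> = 2 * sps_lyapunov n zs ws z w
      + 2 * \<alpha>\<^sup>2 * ((norm S)\<^sup>2 + (\<Sum>i=1..n+1. (norm (x i - xb))\<^sup>2))"
    unfolding sps_lyapunov_def norm_scaleR power_mult_distrib power2_abs
    by (simp add: sum.distrib sum_distrib_left algebra_simps)
  finally show ?thesis unfolding sps_update_sqnorm_def S_def x_def xb_def .
qed

lemma sps_state_1 [simp]: "sps_state n A B \<tau> \<rho> \<alpha> z1 w1 eps ee (Suc 0) = (z1, w1)"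
  unfolding sps_state_def by simp

lemma sps_state_Suc:
  assumes "1 \<le> k"
  shows "sps_state n A B \<tau> \<rho> \<alpha> z1 w1 eps ee (Suc k) =
    sps_step n A B \<tau> \<rho> \<alpha> (fst (sps_state n A B \<tau> \<rho> \<alpha> z1 w1 eps ee k))
      (snd (sps_state n A B \<tau> \<rho> \<alpha> z1 w1 eps ee k)) (eps k) (ee k)"
proof -
  obtain j where k: "k = Suc j" using assms by (cases k) auto
  show ?thesis unfolding sps_state_def k by (simp split: prod.splits)
qed

lemma sps_zw_1 [simp]:
  "sps_z n A B \<tau> \<rho> \<alpha> z1 w1 \<epsilon> e (Suc 0) \<omega> = z1"
  "sps_w n A B \<tau> \<rho> \<alpha> z1 w1 \<epsilon> e (Suc 0) \<omega> = w1"
  unfolding sps_z_def sps_w_def by simp_all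

lemma sps_zw_Suc:
  assumes "1 \<le> k"
  shows "sps_z n A B \<tau> \<rho> \<alpha> z1 w1 \<epsilon> e (Suc k) \<omega> = fst (sps_step n A B \<tau> \<rho> \<alpha>
      (sps_z n A B \<tau> \<rho> \<alpha> z1 w1 \<epsilon> e k \<omega>) (sps_w n A B \<tau> \<rho> \<alpha> z1 w1 \<epsilon> e k \<omega>) (\<epsilon> k \<omega>) (e k \<omega>))"
    and "sps_w n A B \<tau> \<rho> \<alpha> z1 w1 \<epsilon> e (Suc k) \<omega> = snd (sps_step n A B \<tau> \<rho> \<alpha>
      (sps_z n A B \<tau> \<rho> \<alpha> z1 w1 \<epsilon> e k \<omega>) (sps_w n A B \<tau> \<rho> \<alpha> z1 w1 \<epsilon> e k \<omega>) (\<epsilon> k \<omega>) (e k \<omega>))"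
  unfolding sps_z_def sps_w_def by (simp_all add: sps_state_Suc[OF assms])

lemma sps_w_sum_zero:
  assumes w1: "(\<Sum>i=1..n+1. w1 i) = 0" and k: "1 \<le> k"
  shows "(\<Sum>i=1..n+1. sps_w n A B \<tau> \<rho> \<alpha> z1 w1 \<epsilon> e k \<omega> i) = 0"
  using k
proof (induction k rule: nat_induct_at_least)
  case base
  then show ?case using w1 by simp
next
  case (Suc k)
  then show ?case unfolding sps_zw_Suc(2)[OF Suc.hyps] by (intro sps_step_w_sum)
qed

section \<open>Estimates relative to a solution\<close>

locale sps_problem =
  fixes n :: nat and A :: "nat \<Rightarrow> 'a::euclidean_space \<Rightarrow> 'a set" and B :: "'a \<Rightarrow> 'a"
    and \<tau> L :: real and zs :: 'a and ws :: "nat \<Rightarrow> 'a"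
  assumes A_mm: "\<And>i. i \<in> {1..n} \<Longrightarrow> maximal_monotone (A i)"
    and B_mono: "monotone_fun B" and L_pos: "0 < L" and B_lip: "L-lipschitz_on UNIV B"
    and tau: "0 < \<tau>"
    and ws_A: "\<And>i. i \<in> {1..n} \<Longrightarrow> ws i \<in> A i zs" and ws_B: "ws (n + 1) = B zs"
    and ws_sum: "(\<Sum>i=1..n+1. ws i) = 0"
begin

lemma B_lipschitz: "norm (B x - B y) \<le> L * norm (x - y)"
  using lipschitz_onD[OF B_lip, of x y] by (simp add: dist_norm)

lemma resolvent_at_solution: "i \<in> {1..n} \<Longrightarrow> resolvent \<tau> (A i) (zs + \<tau> *\<^sub>R ws i) = zs"
  using ws_A tau by (intro resolvent_eqI maximal_monotone_imp_monotone_op A_mm) auto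

definition descent_const :: real where "descent_const = min (\<tau> / (1 + \<tau>\<^sup>2)) (1/2)"

lemma descent_const_pos: "0 < descent_const"
  unfolding descent_const_def using tau by (simp add: add_pos_nonneg)

lemma phi_summand_resolvent_ge:
  fixes z eps ee :: 'a and w :: "nat \<Rightarrow> 'a"
  assumes i: "i \<in> {1..n}" and rho: "0 < \<rho>" "\<rho> \<le> 1"
  defines "x \<equiv> sps_x n A B \<tau> \<rho> z w eps i" and "y \<equiv> sps_y n A B \<tau> \<rho> z w eps ee i"
  shows "descent_const * \<rho> * ((norm (y - w i))\<^sup>2 + (norm (z - x))\<^sup>2)
    \<le> (z - x) \<bullet> (y - w i) + (x - zs) \<bullet> (y - ws i)"
proof -
  have x_eq: "x = resolvent \<tau> (A i) (z + \<tau> *\<^sub>R w i)" using i unfolding x_def sps_x_def by simp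
  have y_eq: "y = (1 / \<tau>) *\<^sub>R ((z + \<tau> *\<^sub>R w i) - x)"
    using i unfolding y_def sps_y_def x_def by simp
  have "y \<in> A i x" unfolding y_eq x_eq by (rule resolvent_mem[OF A_mm[OF i] tau])
  then have mono: "0 \<le> (x - zs) \<bullet> (y - ws i)"
    using monotone_opD[OF maximal_monotone_imp_monotone_op[OF A_mm[OF i]] _ ws_A[OF i]]
    by (simp add: inner_commute)
  have zx: "z - x = \<tau> *\<^sub>R (y - w i)" unfolding y_eq using tau by (simp add: algebra_simps)
  have "descent_const * \<rho> \<le> \<tau> / (1 + \<tau>\<^sup>2)"
    using rho descent_const_pos unfolding descent_const_def
    by (metis min.boundedE mult_left_le mult.commute order_less_imp_le)
  then have "descent_const * \<rho> * (1 + \<tau>\<^sup>2) \<le> \<tau>"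
    by (simp add: pos_le_divide_eq add_pos_nonneg)
  have "(norm (z - x))\<^sup>2 = \<tau>\<^sup>2 * (norm (y - w i))\<^sup>2" unfolding zx by (simp add: power_mult_distrib)
  then have "descent_const * \<rho> * ((norm (y - w i))\<^sup>2 + (norm (z - x))\<^sup>2)
      = descent_const * \<rho> * (1 + \<tau>\<^sup>2) * (norm (y - w i))\<^sup>2"
    by (simp add: algebra_simps)
  also have "\<dots> \<le> \<tau> * (norm (y - w i))\<^sup>2"
    using \<open>descent_const * \<rho> * (1 + \<tau>\<^sup>2) \<le> \<tau>\<close> by (rule mult_right_mono) simp
  also have "\<dots> = (z - x) \<bullet> (y - w i)" unfolding zx by (simp add: power2_norm_eq_inner)
  finally show ?thesis using mono by linarith
qed

lemma phi_summand_forward_ge: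
  fixes z eps ee :: 'a and w :: "nat \<Rightarrow> 'a"
  assumes rho: "0 < \<rho>" "L * \<rho> \<le> 1/2"
  defines "x \<equiv> sps_x n A B \<tau> \<rho> z w eps (n + 1)" and "y \<equiv> sps_y n A B \<tau> \<rho> z w eps ee (n + 1)"
  defines "u \<equiv> B z - w (n + 1)"
  shows "descent_const * \<rho> * (norm u)\<^sup>2 + \<rho> * (1 - 2 * L * \<rho>) * (eps \<bullet> u)
      - L * \<rho>\<^sup>2 * (norm eps)\<^sup>2 + (z - zs) \<bullet> ee
    \<le> (z - x) \<bullet> (y - w (n + 1)) + (x - zs) \<bullet> (y - ws (n + 1))"
proof -
  define d where "d = u + eps"
  have "x = z - \<rho> *\<^sub>R d" unfolding x_def sps_x_def u_def d_def by (simp add: algebra_simps)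
  then have zx: "z - x = \<rho> *\<^sub>R d" by simp
  have y_eq: "y = B x + ee" unfolding y_def sps_y_def x_def by simp
  have mono: "0 \<le> (x - zs) \<bullet> (B x - B zs)"
    using B_mono unfolding monotone_fun_def by (metis inner_commute)
  have split: "(z - x) \<bullet> (y - w (n + 1)) + (x - zs) \<bullet> (y - ws (n + 1))
      = (z - x) \<bullet> (B x - w (n + 1)) + (z - zs) \<bullet> ee + (x - zs) \<bullet> (B x - B zs)"
    unfolding y_eq ws_B
    by (simp add: inner_diff_left inner_diff_right inner_add_left inner_add_right algebra_simps)
  have Bx_w: "B x - w (n + 1) = u + (B x - B z)" unfolding u_def by simp
  \<comment> \<open>the Lipschitz error of the forward step is of second order in \<open>\<rho>\<close>\<close>
  have "norm (B x - B z) \<le> L * \<rho> * norm d"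
    using B_lipschitz[of x z] rho by (simp add: norm_minus_commute[of x z] zx)
  then have "- (d \<bullet> (B x - B z)) \<le> norm d * (L * \<rho> * norm d)"
    using norm_cauchy_schwarz[of "-d" "B x - B z"] mult_left_mono[of _ _ "norm d"]
    by (fastforce intro: order_trans)
  then have "\<rho> * (- (d \<bullet> (B x - B z))) \<le> \<rho> * (norm d * (L * \<rho> * norm d))"
    using rho by (intro mult_left_mono) auto
  then have "(z - x) \<bullet> (B x - w (n + 1)) \<ge> \<rho> * (d \<bullet> u) - L * \<rho>\<^sup>2 * (norm d)\<^sup>2"
    unfolding zx Bx_w by (simp add: inner_add_right power2_eq_square algebra_simps)
  moreover have "d \<bullet> u = (norm u)\<^sup>2 + eps \<bullet> u" unfolding d_def
    by (simp add: inner_add_left power2_norm_eq_inner)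
  moreover have "(norm d)\<^sup>2 = (norm u)\<^sup>2 + 2 * (eps \<bullet> u) + (norm eps)\<^sup>2" unfolding d_def
    by (simp add: power2_norm_eq_inner inner_add_left inner_add_right inner_commute)
  ultimately have "(z - x) \<bullet> (B x - w (n + 1))
      \<ge> \<rho> * (1 - L * \<rho>) * (norm u)\<^sup>2 + \<rho> * (1 - 2 * L * \<rho>) * (eps \<bullet> u) - L * \<rho>\<^sup>2 * (norm eps)\<^sup>2"
    by (simp add: algebra_simps power2_eq_square)
  moreover have "descent_const * \<rho> * (norm u)\<^sup>2 \<le> \<rho> * (1 - L * \<rho>) * (norm u)\<^sup>2"
  proof -
    have "descent_const \<le> 1 - L * \<rho>" using rho unfolding descent_const_def by linarith
    then show ?thesis using rho by (intro mult_right_mono) (auto simp: mult.commute)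
  qed
  ultimately show ?thesis unfolding split using mono by linarith
qed

lemma phi_gap_ge:
  fixes z eps ee :: 'a and w :: "nat \<Rightarrow> 'a"
  assumes rho: "0 < \<rho>" "\<rho> \<le> 1" "L * \<rho> \<le> 1/2"
  shows "descent_const * \<rho> * sps_residual n A B \<tau> \<rho> z w eps ee
      + \<rho> * (1 - 2 * L * \<rho>) * (eps \<bullet> (B z - w (n + 1))) - L * \<rho>\<^sup>2 * (norm eps)\<^sup>2 + (z - zs) \<bullet> ee
    \<le> sps_phi n A B \<tau> \<rho> z w eps ee z w - sps_phi n A B \<tau> \<rho> z w eps ee zs ws"
proof -
  define x where "x = sps_x n A B \<tau> \<rho> z w eps"
  define y where "y = sps_y n A B \<tau> \<rho> z w eps ee"
  have "descent_const * \<rho> * ((\<Sum>i=1..n. (norm (y i - w i))\<^sup>2) + (\<Sum>i=1..n. (norm (z - x i))\<^sup>2))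
      = (\<Sum>i=1..n. descent_const * \<rho> * ((norm (y i - w i))\<^sup>2 + (norm (z - x i))\<^sup>2))"
    by (simp only: sum.distrib[symmetric] sum_distrib_left)
  also have "\<dots> \<le> (\<Sum>i=1..n. (z - x i) \<bullet> (y i - w i) + (x i - zs) \<bullet> (y i - ws i))"
    unfolding x_def y_def by (intro sum_mono phi_summand_resolvent_ge) (use rho in auto)
  finally show ?thesis
    using phi_summand_forward_ge[OF rho(1,3), of z w eps ee]
    unfolding sps_phi_diff sps_residual_def x_def y_def
    by (simp add: sum.cl_ivl_Suc algebra_simps)
qed

lemma lyapunov_descent:
  fixes z eps ee :: 'a and w :: "nat \<Rightarrow> 'a"
  assumes rho: "0 < \<rho>" "\<rho> \<le> 1" "L * \<rho> \<le> 1/2" and alpha: "0 \<le> \<alpha>"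
    and w_sum: "(\<Sum>i=1..n+1. w i) = 0"
  defines "p' \<equiv> sps_step n A B \<tau> \<rho> \<alpha> z w eps ee"
  shows "sps_lyapunov n zs ws (fst p') (snd p') + 2 * \<alpha> * descent_const * \<rho> * sps_residual n A B \<tau> \<rho> z w eps ee
    \<le> sps_lyapunov n zs ws z w - 2 * \<alpha> * \<rho> * (1 - 2 * L * \<rho>) * (eps \<bullet> (B z - w (n + 1)))
      + 2 * \<alpha> * L * \<rho>\<^sup>2 * (norm eps)\<^sup>2 - 2 * \<alpha> * ((z - zs) \<bullet> ee)
      + \<alpha>\<^sup>2 * sps_update_sqnorm n A B \<tau> \<rho> z w eps ee"
  using sps_step_lyapunov_eq[OF w_sum ws_sum, where A=A and B=B and \<tau>=\<tau> and \<rho>=\<rho> and \<alpha>=\<alpha>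
      and z=z and zs=zs and eps=eps and ee=ee]
    mult_left_mono[OF phi_gap_ge[OF rho, of z w eps ee], of "2 * \<alpha>"] alpha
  unfolding p'_def by (simp add: algebra_simps)

definition growth_const :: real where "growth_const = 3 + 3 * \<tau> + 2 / \<tau> + (L + 3)\<^sup>2"

lemma growth_const_ge:
  "2 / \<tau> + 3 \<le> growth_const" "2 + 3 * \<tau> \<le> growth_const" "L + 2 \<le> growth_const"
  "L * (L + 3) \<le> growth_const" "L + 1 \<le> growth_const" "1 \<le> growth_const"
  unfolding growth_const_def using tau L_pos by (auto simp: power2_eq_square algebra_simps)

lemma resolvent_step_bounds:
  fixes z eps ee :: 'a and w :: "nat \<Rightarrow> 'a" and R \<rho> :: real
  assumes i: "i \<in> {1..n}" and hz: "norm (z - zs) \<le> R" and hw: "norm (w i - ws i) \<le> R"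
  defines "x \<equiv> sps_x n A B \<tau> \<rho> z w eps i" and "y \<equiv> sps_y n A B \<tau> \<rho> z w eps ee i"
  shows "norm (y - ws i) \<le> growth_const * R" "norm (y - w i) \<le> growth_const * R"
    "norm (z - x) \<le> growth_const * R"
proof -
  have R0: "0 \<le> R" using hz norm_ge_zero order_trans by blast
  define t ts where "t = z + \<tau> *\<^sub>R w i" and "ts = zs + \<tau> *\<^sub>R ws i"
  have x_eq: "x = resolvent \<tau> (A i) t" unfolding x_def sps_x_def t_def using i by simp
  have y_eq: "y = (1 / \<tau>) *\<^sub>R (t - x)" unfolding y_def sps_y_def x_def t_def using i by simp
  have "t - ts = (z - zs) + \<tau> *\<^sub>R (w i - ws i)" unfolding t_def ts_def by (simp add: algebra_simps)
  then have "norm (t - ts) \<le> norm (z - zs) + \<tau> * norm (w i - ws i)"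
    using norm_triangle_ineq[of "z - zs" "\<tau> *\<^sub>R (w i - ws i)"] tau by simp
  also have "\<dots> \<le> (1 + \<tau>) * R" using hz hw tau by (simp add: algebra_simps mult_left_mono add_mono)
  finally have tt: "norm (t - ts) \<le> (1 + \<tau>) * R" .
  have xz: "norm (x - zs) \<le> (1 + \<tau>) * R"
    using resolvent_nonexpansive[OF A_mm[OF i] tau, of t ts] resolvent_at_solution[OF i] tt
    unfolding x_eq ts_def by simp
  have "y - ws i = (1 / \<tau>) *\<^sub>R ((t - ts) - (x - zs))"
    unfolding y_eq ts_def using tau by (simp add: algebra_simps)
  then have "norm (y - ws i) = (1 / \<tau>) * norm ((t - ts) - (x - zs))" using tau by simp
  also have "\<dots> \<le> (1 / \<tau>) * (norm (t - ts) + norm (x - zs))"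
    using tau by (intro mult_left_mono norm_triangle_ineq4) auto
  also have "\<dots> \<le> (1 / \<tau>) * ((1 + \<tau>) * R + (1 + \<tau>) * R)"
    using tt xz tau by (intro mult_left_mono add_mono) auto
  also have "\<dots> = (2 / \<tau> + 2) * R" using tau by (simp add: field_simps)
  finally have y_ws: "norm (y - ws i) \<le> (2 / \<tau> + 2) * R" .
  then show "norm (y - ws i) \<le> growth_const * R"
    using growth_const_ge(1) R0 by (smt (verit) mult_right_mono)
  have y_w: "norm (y - w i) \<le> (2 / \<tau> + 3) * R"
    using norm_triangle_ineq4[of "y - ws i" "w i - ws i"] y_ws hw by (simp add: algebra_simps)
  then show "norm (y - w i) \<le> growth_const * R"
    using growth_const_ge(1) R0 by (smt (verit) mult_right_mono)
  have "z - x = \<tau> *\<^sub>R (y - w i)" unfolding y_eq t_def using tau by (simp add: algebra_simps)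
  then have "norm (z - x) = \<tau> * norm (y - w i)" using tau by simp
  also have "\<dots> \<le> \<tau> * ((2 / \<tau> + 3) * R)" using y_w tau by (intro mult_left_mono) auto
  also have "\<dots> = (2 + 3 * \<tau>) * R" using tau by (simp add: field_simps)
  also have "\<dots> \<le> growth_const * R" using growth_const_ge(2) R0 by (intro mult_right_mono) auto
  finally show "norm (z - x) \<le> growth_const * R" .
qed

lemma forward_step_bounds:
  fixes z eps ee :: 'a and w :: "nat \<Rightarrow> 'a" and R \<rho> :: real
  assumes rho: "0 < \<rho>" "\<rho> \<le> 1" and hz: "norm (z - zs) \<le> R"
    and hw: "norm (w (n + 1) - ws (n + 1)) \<le> R" and he: "norm eps \<le> R"
  defines "x \<equiv> sps_x n A B \<tau> \<rho> z w eps (n + 1)" and "y \<equiv> sps_y n A B \<tau> \<rho> z w eps ee (n + 1)"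
  shows "norm (B z - w (n + 1)) \<le> growth_const * R" "norm (z - x) \<le> growth_const * R"
    "norm (B x - B zs) \<le> growth_const * R" "norm (y - ws (n + 1)) \<le> growth_const * R + norm ee"
proof -
  have R0: "0 \<le> R" using hz norm_ge_zero order_trans by blast
  have "norm (B z - w (n + 1)) \<le> norm (B z - B zs) + norm (w (n + 1) - ws (n + 1))"
    using ws_B norm_triangle_ineq4[of "B z - B zs" "w (n + 1) - ws (n + 1)"] by simp
  also have "\<dots> \<le> (L + 1) * R"
  proof -
    have "L * norm (z - zs) \<le> L * R" using hz L_pos by (intro mult_left_mono) auto
    then show ?thesis using B_lipschitz[of z zs] hw by (simp add: algebra_simps)
  qed
  finally have u: "norm (B z - w (n + 1)) \<le> (L + 1) * R" .
  then show "norm (B z - w (n + 1)) \<le> growth_const * R"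
    using growth_const_ge(5) R0 by (smt (verit) mult_right_mono)
  have "z - x = \<rho> *\<^sub>R ((B z - w (n + 1)) + eps)"
    unfolding x_def sps_x_def by (simp add: algebra_simps)
  then have "norm (z - x) = \<rho> * norm ((B z - w (n + 1)) + eps)" using rho by simp
  also have "\<dots> \<le> norm ((B z - w (n + 1)) + eps)" using rho by (simp add: mult_left_le_one_le)
  also have "\<dots> \<le> (L + 2) * R"
    using norm_triangle_ineq[of "B z - w (n + 1)" eps] u he by (simp add: algebra_simps)
  finally have zx: "norm (z - x) \<le> (L + 2) * R" .
  then show "norm (z - x) \<le> growth_const * R"
    using growth_const_ge(3) R0 by (smt (verit) mult_right_mono)
  have "norm (x - zs) \<le> norm (z - x) + norm (z - zs)"
    using norm_triangle_ineq[of "x - z" "z - zs"] by (simp add: norm_minus_commute)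
  then have "norm (x - zs) \<le> (L + 3) * R" using zx hz by (simp add: algebra_simps)
  then have Bx: "norm (B x - B zs) \<le> L * (L + 3) * R"
    using B_lipschitz[of x zs] mult_left_mono[of _ _ L] L_pos by (smt (verit) mult.assoc)
  moreover have "L * (L + 3) * R \<le> growth_const * R"
    using growth_const_ge(4) R0 by (intro mult_right_mono) auto
  ultimately show "norm (B x - B zs) \<le> growth_const * R" by linarith
  have "y - ws (n + 1) = (B x - B zs) + ee" unfolding y_def sps_y_def x_def using ws_B by simp
  then show "norm (y - ws (n + 1)) \<le> growth_const * R + norm ee"
    using norm_triangle_ineq[of "B x - B zs" ee] \<open>norm (B x - B zs) \<le> growth_const * R\<close> by simp
qed


definition update_const :: real where
  "update_const = (real (n + 1))\<^sup>2 * (growth_const + 1)\<^sup>2 + 4 * real (n + 1) * growth_const\<^sup>2"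

lemma update_const_nonneg: "0 \<le> update_const"
  unfolding update_const_def by simp

lemma step_bounds:
  fixes z eps ee :: 'a and w :: "nat \<Rightarrow> 'a" and R \<rho> :: real
  assumes rho: "0 < \<rho>" "\<rho> \<le> 1" and i: "i \<in> {1..n+1}" and hz: "norm (z - zs) \<le> R"
    and hw: "\<And>i. i \<in> {1..n+1} \<Longrightarrow> norm (w i - ws i) \<le> R"
    and he: "norm eps \<le> R" and hee: "norm ee \<le> R"
  shows "norm (sps_y n A B \<tau> \<rho> z w eps ee i - ws i) \<le> (growth_const + 1) * R"
    and "norm (z - sps_x n A B \<tau> \<rho> z w eps i) \<le> growth_const * R"
proof -
  have R0: "0 \<le> R" using hz norm_ge_zero order_trans by blast
  show "norm (sps_y n A B \<tau> \<rho> z w eps ee i - ws i) \<le> (growth_const + 1) * R"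
  proof (cases "i \<le> n")
    case True
    then show ?thesis
      using resolvent_step_bounds(1)[where w=w and \<rho>=\<rho> and eps=eps and ee=ee, OF _ hz hw[OF i]] i R0
      by (simp add: algebra_simps)
  next
    case False
    then have "i = n + 1" using i by simp
    then show ?thesis
      using forward_step_bounds(4)[where w=w and ee=ee, OF rho hz hw[of "n + 1"] he] hee
      by (simp add: algebra_simps)
  qed
  show "norm (z - sps_x n A B \<tau> \<rho> z w eps i) \<le> growth_const * R"
  proof (cases "i \<le> n")
    case True
    then show ?thesis
      using resolvent_step_bounds(3)[where w=w and \<rho>=\<rho> and eps=eps, OF _ hz hw[OF i]] i by simp
  next
    case False
    then have "i = n + 1" using i by simp
    then show ?thesis using forward_step_bounds(2)[where w=w, OF rho hz hw[of "n + 1"] he] by simp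
  qed
qed

lemma update_sqnorm_le:
  fixes z eps ee :: 'a and w :: "nat \<Rightarrow> 'a" and \<rho> :: real
  assumes rho: "0 < \<rho>" "\<rho> \<le> 1"
  shows "sps_update_sqnorm n A B \<tau> \<rho> z w eps ee
    \<le> update_const * (sps_lyapunov n zs ws z w + (norm eps)\<^sup>2 + (norm ee)\<^sup>2)"
proof -
  define x where "x = sps_x n A B \<tau> \<rho> z w eps"
  define y where "y = sps_y n A B \<tau> \<rho> z w eps ee"
  define xb where "xb = (1 / real (n + 1)) *\<^sub>R (\<Sum>j=1..n+1. x j)"
  define R where "R = sqrt (sps_lyapunov n zs ws z w + (norm eps)\<^sup>2 + (norm ee)\<^sup>2)"
  note R = sqrt_sps_lyapunov_bounds[where n=n and z=z and zs=zs and ws=ws and w=w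
      and eps=eps and s="(norm ee)\<^sup>2", OF zero_le_power2, folded R_def]
  note bounds = step_bounds[OF rho _ R(1) R(2) R(3) R(4)[simplified], folded x_def y_def]
  \<comment> \<open>\<open>\<Sum>ws = 0\<close> lets each \<open>y i\<close> be measured from \<open>ws i\<close>\<close>
  have "norm (\<Sum>i=1..n+1. y i) \<le> (\<Sum>i=1..n+1. norm (y i - ws i))"
    using ws_sum norm_sum[of "\<lambda>i. y i - ws i" "{1..n+1}"] by (simp add: sum_subtractf)
  also have "\<dots> \<le> real (n + 1) * ((growth_const + 1) * R)"
    using sum_bounded_above[of "{1..n+1}" "\<lambda>i. norm (y i - ws i)"] bounds(1) by simp
  finally have "(norm (\<Sum>i=1..n+1. y i))\<^sup>2 \<le> (real (n + 1) * ((growth_const + 1) * R))\<^sup>2"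
    by (intro power_mono) auto
  then have sum_y: "(norm (\<Sum>i=1..n+1. y i))\<^sup>2 \<le> (real (n + 1))\<^sup>2 * (growth_const + 1)\<^sup>2 * R\<^sup>2"
    by (simp add: power_mult_distrib)
  have z_xb: "norm (z - xb) \<le> growth_const * R"
    using norm_diff_mean_le[of "{1..n+1}" z x] bounds(2) unfolding xb_def by simp
  have "(norm (x i - xb))\<^sup>2 \<le> 4 * growth_const\<^sup>2 * R\<^sup>2" if i: "i \<in> {1..n+1}" for i
  proof -
    have "norm (x i - xb) \<le> norm (z - xb) + norm (z - x i)"
      using norm_triangle_ineq4[of "z - xb" "z - x i"] by simp
    also have "\<dots> \<le> 2 * (growth_const * R)" using z_xb bounds(2)[OF i] by simp
    finally have "(norm (x i - xb))\<^sup>2 \<le> (2 * (growth_const * R))\<^sup>2" by (intro power_mono) auto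
    then show ?thesis by (simp add: power_mult_distrib)
  qed
  then have "(\<Sum>i=1..n+1. (norm (x i - xb))\<^sup>2) \<le> real (n + 1) * (4 * growth_const\<^sup>2 * R\<^sup>2)"
    using sum_bounded_above[of "{1..n+1}" "\<lambda>i. (norm (x i - xb))\<^sup>2"] by simp
  with sum_y have "sps_update_sqnorm n A B \<tau> \<rho> z w eps ee \<le> update_const * R\<^sup>2"
    unfolding sps_update_sqnorm_def update_const_def x_def y_def xb_def by (simp add: algebra_simps)
  then show ?thesis unfolding R(5) .
qed

definition residual_const :: real where "residual_const = (2 * real n + 1) * growth_const\<^sup>2"

lemma residual_le:
  fixes z eps ee :: 'a and w :: "nat \<Rightarrow> 'a" and \<rho> :: real
  assumes rho: "0 < \<rho>" "\<rho> \<le> 1"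
  shows "sps_residual n A B \<tau> \<rho> z w eps ee \<le> residual_const * (sps_lyapunov n zs ws z w + (norm eps)\<^sup>2)"
proof -
  define R where "R = sqrt (sps_lyapunov n zs ws z w + (norm eps)\<^sup>2 + 0)"
  note R = sqrt_sps_lyapunov_bounds[where n=n and z=z and zs=zs and ws=ws and w=w
      and eps=eps and s=0, OF order_refl, folded R_def]
  have sq: "(norm v)\<^sup>2 \<le> growth_const\<^sup>2 * R\<^sup>2" if "norm v \<le> growth_const * R" for v :: 'a
    using power_mono[OF that norm_ge_zero] by (simp add: power_mult_distrib)
  have "(\<Sum>i=1..n. (norm (sps_y n A B \<tau> \<rho> z w eps ee i - w i))\<^sup>2) \<le> real n * (growth_const\<^sup>2 * R\<^sup>2)"
    using sum_bounded_above[of "{1..n}" "\<lambda>i. (norm (sps_y n A B \<tau> \<rho> z w eps ee i - w i))\<^sup>2"]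
      sq[OF resolvent_step_bounds(2)[where w=w and \<rho>=\<rho> and eps=eps and ee=ee, OF _ R(1) R(2)]] by simp
  moreover have "(\<Sum>i=1..n. (norm (z - sps_x n A B \<tau> \<rho> z w eps i))\<^sup>2) \<le> real n * (growth_const\<^sup>2 * R\<^sup>2)"
    using sum_bounded_above[of "{1..n}" "\<lambda>i. (norm (z - sps_x n A B \<tau> \<rho> z w eps i))\<^sup>2"]
      sq[OF resolvent_step_bounds(3)[where w=w and \<rho>=\<rho> and eps=eps, OF _ R(1) R(2)]] by simp
  moreover have "(norm (B z - w (n + 1)))\<^sup>2 \<le> growth_const\<^sup>2 * R\<^sup>2"
    by (rule sq[OF forward_step_bounds(1)[where w=w, OF rho R(1) R(2)[of "n + 1"] R(3)]]) simp
  ultimately have "sps_residual n A B \<tau> \<rho> z w eps ee \<le> residual_const * R\<^sup>2"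
    unfolding sps_residual_def residual_const_def by (simp add: algebra_simps)
  then show ?thesis unfolding R(5) by simp
qed

lemma norm_B_sq_le: "(norm (B z))\<^sup>2 \<le> 2 * L\<^sup>2 * sps_lyapunov n zs ws z w + 2 * (norm (B zs))\<^sup>2"
proof -
  have "norm (B z) \<le> L * norm (z - zs) + norm (B zs)"
    using norm_triangle_sub[of "B z" "B zs"] B_lipschitz[of z zs] by simp
  then have "(norm (B z))\<^sup>2 \<le> (L * norm (z - zs) + norm (B zs))\<^sup>2" by (intro power_mono) auto
  also have "\<dots> \<le> 2 * (L * norm (z - zs))\<^sup>2 + 2 * (norm (B zs))\<^sup>2" by (rule power2_add_le)
  also have "(L * norm (z - zs))\<^sup>2 \<le> L\<^sup>2 * sps_lyapunov n zs ws z w"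
    using sps_lyapunov_ge(2)[of z zs n ws w] by (simp add: power_mult_distrib mult_left_mono)
  finally show ?thesis by simp
qed

lemma norm_B_forward_sq_le:
  fixes z eps :: 'a and w :: "nat \<Rightarrow> 'a" and \<rho> :: real
  assumes rho: "0 < \<rho>" "\<rho> \<le> 1"
  shows "(norm (B (sps_x n A B \<tau> \<rho> z w eps (n + 1))))\<^sup>2
    \<le> 2 * growth_const\<^sup>2 * (sps_lyapunov n zs ws z w + (norm eps)\<^sup>2) + 2 * (norm (B zs))\<^sup>2"
proof -
  define R where "R = sqrt (sps_lyapunov n zs ws z w + (norm eps)\<^sup>2 + 0)"
  note R = sqrt_sps_lyapunov_bounds[where n=n and z=z and zs=zs and ws=ws and w=w
      and eps=eps and s=0, OF order_refl, folded R_def]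
  define x where "x = sps_x n A B \<tau> \<rho> z w eps (n + 1)"
  have "norm (B x) \<le> growth_const * R + norm (B zs)"
    using forward_step_bounds(3)[where w=w, OF rho R(1) R(2)[of "n + 1"] R(3)] norm_triangle_sub[of "B x" "B zs"]
    unfolding x_def by simp
  then have "(norm (B x))\<^sup>2 \<le> (growth_const * R + norm (B zs))\<^sup>2" by (intro power_mono) auto
  also have "\<dots> \<le> 2 * (growth_const * R)\<^sup>2 + 2 * (norm (B zs))\<^sup>2" by (rule power2_add_le)
  finally show ?thesis unfolding x_def power_mult_distrib R(5) by simp
qed

lemma borel_measurable_B: "B \<in> borel_measurable borel"
  by (intro borel_measurable_continuous_onI lipschitz_on_continuous_on[OF B_lip])

lemma measurable_sps_x:
  assumes z: "zr \<in> borel_measurable M"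
    and w: "\<forall>i\<in>{1..n+1}. (\<lambda>\<omega>. wr \<omega> i) \<in> borel_measurable M"
    and eps: "epsr \<in> borel_measurable M" and i: "i \<in> {1..n+1}"
  shows "(\<lambda>\<omega>. sps_x n A B \<tau> \<rho> (zr \<omega>) (wr \<omega>) (epsr \<omega>) i) \<in> borel_measurable M"
proof (cases "i \<le> n")
  case True
  then have "resolvent \<tau> (A i) \<in> borel_measurable borel"
    using i tau A_mm by (intro borel_measurable_continuous_onI continuous_on_resolvent) auto
  moreover have "(\<lambda>\<omega>. zr \<omega> + \<tau> *\<^sub>R wr \<omega> i) \<in> borel_measurable M" using z bspec[OF w i] by measurable
  ultimately have "(\<lambda>\<omega>. resolvent \<tau> (A i) (zr \<omega> + \<tau> *\<^sub>R wr \<omega> i)) \<in> borel_measurable M"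
    using measurable_compose by blast
  then show ?thesis using True by (simp add: sps_x_def)
next
  case False
  have "(\<lambda>\<omega>. B (zr \<omega>)) \<in> borel_measurable M" using measurable_compose[OF z borel_measurable_B] .
  then have "(\<lambda>\<omega>. zr \<omega> - \<rho> *\<^sub>R ((B (zr \<omega>) + epsr \<omega>) - wr \<omega> (n + 1))) \<in> borel_measurable M"
    using z w[rule_format, of "n + 1"] eps by measurable
  then show ?thesis using False by (simp add: sps_x_def)
qed

lemma measurable_sps_y:
  assumes z: "zr \<in> borel_measurable M"
    and w: "\<forall>i\<in>{1..n+1}. (\<lambda>\<omega>. wr \<omega> i) \<in> borel_measurable M"
    and eps: "epsr \<in> borel_measurable M" and ee: "eer \<in> borel_measurable M" and i: "i \<in> {1..n+1}"
  shows "(\<lambda>\<omega>. sps_y n A B \<tau> \<rho> (zr \<omega>) (wr \<omega>) (epsr \<omega>) (eer \<omega>) i) \<in> borel_measurable M"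
proof -
  note x = measurable_sps_x[where \<rho>=\<rho>, OF z w eps]
  have "(\<lambda>\<omega>. B (sps_x n A B \<tau> \<rho> (zr \<omega>) (wr \<omega>) (epsr \<omega>) (n + 1))) \<in> borel_measurable M"
    using measurable_compose[OF x[where i="n + 1"] borel_measurable_B] by simp
  moreover have "(\<lambda>\<omega>. (1 / \<tau>) *\<^sub>R ((zr \<omega> + \<tau> *\<^sub>R wr \<omega> i) - sps_x n A B \<tau> \<rho> (zr \<omega>) (wr \<omega>) (epsr \<omega>) i))
      \<in> borel_measurable M"
    using x[OF i] z bspec[OF w i] by measurable
  ultimately show ?thesis using ee by (cases "i \<le> n") (simp_all add: sps_y_def)
qed

lemma measurable_sps_step:
  assumes z: "zr \<in> borel_measurable M"
    and w: "\<forall>i\<in>{1..n+1}. (\<lambda>\<omega>. wr \<omega> i) \<in> borel_measurable M"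
    and eps: "epsr \<in> borel_measurable M" and ee: "eer \<in> borel_measurable M"
  shows "(\<lambda>\<omega>. fst (sps_step n A B \<tau> \<rho> \<alpha> (zr \<omega>) (wr \<omega>) (epsr \<omega>) (eer \<omega>))) \<in> borel_measurable M"
    and "i \<in> {1..n+1} \<Longrightarrow>
      (\<lambda>\<omega>. snd (sps_step n A B \<tau> \<rho> \<alpha> (zr \<omega>) (wr \<omega>) (epsr \<omega>) (eer \<omega>)) i) \<in> borel_measurable M"
proof -
  have y: "(\<lambda>\<omega>. \<Sum>i=1..n+1. sps_y n A B \<tau> \<rho> (zr \<omega>) (wr \<omega>) (epsr \<omega>) (eer \<omega>) i) \<in> borel_measurable M"
    by (intro borel_measurable_sum measurable_sps_y[OF z w eps ee])
  have x: "(\<lambda>\<omega>. \<Sum>i=1..n+1. sps_x n A B \<tau> \<rho> (zr \<omega>) (wr \<omega>) (epsr \<omega>) i) \<in> borel_measurable M"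
    by (intro borel_measurable_sum measurable_sps_x[OF z w eps])
  show "(\<lambda>\<omega>. fst (sps_step n A B \<tau> \<rho> \<alpha> (zr \<omega>) (wr \<omega>) (epsr \<omega>) (eer \<omega>))) \<in> borel_measurable M"
    unfolding sps_step_def fst_conv using z y by measurable
  show "(\<lambda>\<omega>. snd (sps_step n A B \<tau> \<rho> \<alpha> (zr \<omega>) (wr \<omega>) (epsr \<omega>) (eer \<omega>)) i) \<in> borel_measurable M"
    if i: "i \<in> {1..n+1}"
    unfolding sps_step_def snd_conv using bspec[OF w i] measurable_sps_x[where \<rho>=\<rho>, OF z w eps i] x by measurable
qed

lemma measurable_sps_update_sqnorm:
  assumes z: "zr \<in> borel_measurable M"
    and w: "\<forall>i\<in>{1..n+1}. (\<lambda>\<omega>. wr \<omega> i) \<in> borel_measurable M"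
    and eps: "epsr \<in> borel_measurable M" and ee: "eer \<in> borel_measurable M"
  shows "(\<lambda>\<omega>. sps_update_sqnorm n A B \<tau> \<rho> (zr \<omega>) (wr \<omega>) (epsr \<omega>) (eer \<omega>)) \<in> borel_measurable M"
proof -
  note x = measurable_sps_x[where \<rho>=\<rho>, OF z w eps] and y = measurable_sps_y[where \<rho>=\<rho>, OF z w eps ee]
  have y_sum: "(\<lambda>\<omega>. \<Sum>i=1..n+1. sps_y n A B \<tau> \<rho> (zr \<omega>) (wr \<omega>) (epsr \<omega>) (eer \<omega>) i) \<in> borel_measurable M"
    by (intro borel_measurable_sum y)
  have x_mean: "(\<lambda>\<omega>. (1 / real (n + 1)) *\<^sub>R (\<Sum>j=1..n+1. sps_x n A B \<tau> \<rho> (zr \<omega>) (wr \<omega>) (epsr \<omega>) j))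
      \<in> borel_measurable M"
    by (intro borel_measurable_scaleR borel_measurable_const borel_measurable_sum x)
  show ?thesis
    unfolding sps_update_sqnorm_def
  proof (intro borel_measurable_add borel_measurable_sum)
    show "(\<lambda>\<omega>. (norm (\<Sum>i=1..n+1. sps_y n A B \<tau> \<rho> (zr \<omega>) (wr \<omega>) (epsr \<omega>) (eer \<omega>) i))\<^sup>2)
        \<in> borel_measurable M"
      using y_sum by measurable
    fix i assume "i \<in> {1..n+1}"
    then show "(\<lambda>\<omega>. (norm (sps_x n A B \<tau> \<rho> (zr \<omega>) (wr \<omega>) (epsr \<omega>) i
        - (1 / real (n + 1)) *\<^sub>R (\<Sum>j=1..n+1. sps_x n A B \<tau> \<rho> (zr \<omega>) (wr \<omega>) (epsr \<omega>) j)))\<^sup>2)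
        \<in> borel_measurable M"
      using x x_mean by measurable
  qed
qed

lemma measurable_sps_residual:
  assumes z: "zr \<in> borel_measurable M"
    and w: "\<forall>i\<in>{1..n+1}. (\<lambda>\<omega>. wr \<omega> i) \<in> borel_measurable M"
    and eps: "epsr \<in> borel_measurable M" and ee: "eer \<in> borel_measurable M"
  shows "(\<lambda>\<omega>. sps_residual n A B \<tau> \<rho> (zr \<omega>) (wr \<omega>) (epsr \<omega>) (eer \<omega>)) \<in> borel_measurable M"
  unfolding sps_residual_def
proof (intro borel_measurable_add borel_measurable_sum)
  fix i assume "i \<in> {1..n}"
  then have i: "i \<in> {1..n+1}" by simp
  show "(\<lambda>\<omega>. (norm (sps_y n A B \<tau> \<rho> (zr \<omega>) (wr \<omega>) (epsr \<omega>) (eer \<omega>) i - wr \<omega> i))\<^sup>2)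
      \<in> borel_measurable M"
    using measurable_sps_y[where \<rho>=\<rho>, OF z w eps ee i] bspec[OF w i] by measurable
  show "(\<lambda>\<omega>. (norm (zr \<omega> - sps_x n A B \<tau> \<rho> (zr \<omega>) (wr \<omega>) (epsr \<omega>) i))\<^sup>2) \<in> borel_measurable M"
    using measurable_sps_x[where \<rho>=\<rho>, OF z w eps i] z by measurable
next
  have "(\<lambda>\<omega>. wr \<omega> (n + 1)) \<in> borel_measurable M" using w by simp
  then show "(\<lambda>\<omega>. (norm (B (zr \<omega>) - wr \<omega> (n + 1)))\<^sup>2) \<in> borel_measurable M"
    using measurable_compose[OF z borel_measurable_B] by measurable
qed

lemma measurable_sps_iterates:
  assumes noise: "\<And>j. j \<in> {1..K} \<Longrightarrow> \<epsilon> j \<in> borel_measurable M \<and> e j \<in> borel_measurable M"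
    and k: "k \<in> {1..K+1}"
  shows "sps_z n A B \<tau> \<rho> \<alpha> z1 w1 \<epsilon> e k \<in> borel_measurable M"
    and "\<forall>i\<in>{1..n+1}. (\<lambda>\<omega>. sps_w n A B \<tau> \<rho> \<alpha> z1 w1 \<epsilon> e k \<omega> i) \<in> borel_measurable M"
proof -
  have "1 \<le> k" using k by simp
  then have "sps_z n A B \<tau> \<rho> \<alpha> z1 w1 \<epsilon> e k \<in> borel_measurable M
     \<and> (\<forall>i\<in>{1..n+1}. (\<lambda>\<omega>. sps_w n A B \<tau> \<rho> \<alpha> z1 w1 \<epsilon> e k \<omega> i) \<in> borel_measurable M)"
  proof (induction k rule: dec_induct)
    case base
    then show ?case by simp
  next
    case (step j)
    then have "j \<in> {1..K}" using k by simp
    then have "\<epsilon> j \<in> borel_measurable M" "e j \<in> borel_measurable M" using noise by auto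
    note step_meas = measurable_sps_step[where \<rho>=\<rho> and \<alpha>=\<alpha>, OF step.IH[THEN conjunct1]
        step.IH[THEN conjunct2] this]
    show ?case unfolding sps_zw_Suc[OF step.hyps(1)] using step_meas by simp
  qed
  then show "sps_z n A B \<tau> \<rho> \<alpha> z1 w1 \<epsilon> e k \<in> borel_measurable M"
    and "\<forall>i\<in>{1..n+1}. (\<lambda>\<omega>. sps_w n A B \<tau> \<rho> \<alpha> z1 w1 \<epsilon> e k \<omega> i) \<in> borel_measurable M"
    by auto
qed

end

section \<open>Conditional expectations\<close>

lemma sigma_gen_subalgebra:
  fixes Fs :: "('m \<Rightarrow> 'a::topological_space) set"
  assumes meas: "\<forall>f\<in>Fs. f \<in> borel_measurable M"
  shows "subalgebra M (sigma_gen M Fs)"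
    and "\<And>f. f \<in> Fs \<Longrightarrow> f \<in> borel_measurable (sigma_gen M Fs)"
proof -
  define G where "G = {f -` U \<inter> space M | f U. f \<in> Fs \<and> open U}"
  have G_sets: "G \<subseteq> sets M"
    unfolding G_def using measurable_sets[OF bspec[OF meas]] by (auto intro: borel_open)
  have G_Pow: "G \<subseteq> Pow (space M)" unfolding G_def by auto
  have space: "space (sigma_gen M Fs) = space M"
    unfolding sigma_gen_def G_def[symmetric] using G_Pow by (simp add: space_measure_of)
  have sets: "sets (sigma_gen M Fs) = sigma_sets (space M) G"
    unfolding sigma_gen_def G_def[symmetric] using G_Pow by (simp add: sets_measure_of)
  show "subalgebra M (sigma_gen M Fs)"
    unfolding subalgebra_def using space sets sets.sigma_sets_subset[OF G_sets] by simp
  fix f assume f: "f \<in> Fs"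
  show "f \<in> borel_measurable (sigma_gen M Fs)"
  proof (rule borel_measurableI)
    fix S :: "'a set" assume "open S"
    then have "f -` S \<inter> space M \<in> G" unfolding G_def using f by blast
    then show "f -` S \<inter> space (sigma_gen M Fs) \<in> sets (sigma_gen M Fs)"
      unfolding space sets by (rule sigma_sets.Basic)
  qed
qed

lemma integrable_nonneg_le:
  fixes f g :: "'m \<Rightarrow> real"
  assumes "integrable M g" "f \<in> borel_measurable M" "\<And>x. 0 \<le> f x" "\<And>x. f x \<le> g x"
  shows "integrable M f"
  by (rule Bochner_Integration.integrable_bound[OF assms(1,2)])
    (use assms(3,4) in \<open>auto intro!: AE_I2 order_trans[OF _ abs_ge_self]\<close>)

lemma integral_le_of_nn_cond_exp_le:
  fixes f g :: "'m \<Rightarrow> real"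
  assumes "prob_space M" and sub: "subalgebra M F"
    and f: "f \<in> borel_measurable M" "\<And>x. 0 \<le> f x"
    and g: "integrable M g" "\<And>x. 0 \<le> g x"
    and le: "AE x in M. nn_cond_exp M F (\<lambda>x. ennreal (f x)) x \<le> ennreal (g x)"
  shows "integrable M f" and "integral\<^sup>L M f \<le> integral\<^sup>L M g"
proof -
  interpret prob_space M by fact
  interpret finite_measure_subalgebra M F
    by (rule finite_measure_subalgebra.intro[OF finite_measure_axioms]) (unfold_locales, rule sub)
  have "(\<integral>\<^sup>+ x. ennreal (f x) \<partial>M) = (\<integral>\<^sup>+ x. 1 * nn_cond_exp M F (\<lambda>x. ennreal (f x)) x \<partial>M)"
    using nn_cond_exp_intg[of "\<lambda>_. 1" "\<lambda>x. ennreal (f x)"] f(1) by simp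
  also have "\<dots> \<le> (\<integral>\<^sup>+ x. ennreal (g x) \<partial>M)"
    using le by (intro nn_integral_mono_AE) auto
  also have "\<dots> = ennreal (integral\<^sup>L M g)"
    using g by (intro nn_integral_eq_integral) auto
  finally have le_int: "(\<integral>\<^sup>+ x. ennreal (f x) \<partial>M) \<le> ennreal (integral\<^sup>L M g)" .
  show f_int: "integrable M f"
    using le_int f by (intro integrableI_nonneg) (auto simp: top_unique less_top[symmetric] order.strict_trans1)
  have "ennreal (integral\<^sup>L M f) \<le> ennreal (integral\<^sup>L M g)"
    using le_int f_int f(2) by (subst nn_integral_eq_integral[symmetric]) auto
  moreover have "0 \<le> integral\<^sup>L M g" using g(2) by (intro integral_nonneg_AE) auto
  ultimately show "integral\<^sup>L M f \<le> integral\<^sup>L M g" by (simp add: ennreal_le_iff)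
qed

(* Componentwise: E[(X \<bullet> b)(Y \<bullet> b)] = E[(Y \<bullet> b) E[X \<bullet> b | F]] = 0 for F-measurable Y. *)
lemma integral_inner_cond_exp_zero:
  fixes X Y :: "'m \<Rightarrow> 'a::euclidean_space"
  assumes "prob_space M" and sub: "subalgebra M F"
    and X: "X \<in> borel_measurable M" and Y: "Y \<in> borel_measurable F"
    and X_sq: "integrable M (\<lambda>x. (norm (X x))\<^sup>2)" and Y_sq: "integrable M (\<lambda>x. (norm (Y x))\<^sup>2)"
    and centred: "\<forall>b\<in>Basis. AE x in M. real_cond_exp M F (\<lambda>x. X x \<bullet> b) x = 0"
  shows "integrable M (\<lambda>x. X x \<bullet> Y x)" and "integral\<^sup>L M (\<lambda>x. X x \<bullet> Y x) = 0"
proof -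
  interpret prob_space M by fact
  interpret finite_measure_subalgebra M F
    by (rule finite_measure_subalgebra.intro[OF finite_measure_axioms]) (unfold_locales, rule sub)
  have Y_M: "Y \<in> borel_measurable M" using Y sub by (rule measurable_from_subalg[rotated])
  have int_b: "integrable M (\<lambda>x. (Y x \<bullet> b) * (X x \<bullet> b))" if b: "b \<in> Basis" for b
  proof (rule Bochner_Integration.integrable_bound)
    show "integrable M (\<lambda>x. (norm (X x))\<^sup>2 + (norm (Y x))\<^sup>2)" using X_sq Y_sq by simp
    show "(\<lambda>x. (Y x \<bullet> b) * (X x \<bullet> b)) \<in> borel_measurable M" using X Y_M by measurable
    have "\<bar>(Y x \<bullet> b) * (X x \<bullet> b)\<bar> \<le> norm (Y x) * norm (X x)" for x
      using Basis_le_norm[OF b] by (simp add: abs_mult mult_mono)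
    moreover have "norm (Y x) * norm (X x) \<le> (norm (X x))\<^sup>2 + (norm (Y x))\<^sup>2" for x
      using sum_squares_bound[of "norm (Y x)" "norm (X x)"]
        mult_nonneg_nonneg[OF norm_ge_zero norm_ge_zero, of "Y x" "X x"] by linarith
    ultimately show "AE x in M. norm ((Y x \<bullet> b) * (X x \<bullet> b)) \<le> norm ((norm (X x))\<^sup>2 + (norm (Y x))\<^sup>2)"
      by (intro AE_I2) (auto intro: order_trans)
  qed
  have int_b_zero: "integral\<^sup>L M (\<lambda>x. (Y x \<bullet> b) * (X x \<bullet> b)) = 0" if b: "b \<in> Basis" for b
  proof -
    have Yb: "(\<lambda>x. Y x \<bullet> b) \<in> borel_measurable F" using Y by measurable
    have Xb: "(\<lambda>x. X x \<bullet> b) \<in> borel_measurable M" using X by measurable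
    have "AE x in M. (Y x \<bullet> b) * real_cond_exp M F (\<lambda>x. X x \<bullet> b) x = 0"
      using centred b by (auto elim!: AE_mp)
    then have "integral\<^sup>L M (\<lambda>x. (Y x \<bullet> b) * real_cond_exp M F (\<lambda>x. X x \<bullet> b) x) = 0"
      using integral_cong_AE[of _ _ "\<lambda>_. 0"] Y_M by (simp add: integral_eq_zero_AE)
    then show ?thesis using real_cond_exp_intg(2)[OF int_b[OF b] Yb Xb] by simp
  qed
  have inner_eq: "(\<lambda>x. X x \<bullet> Y x) = (\<lambda>x. \<Sum>b\<in>Basis. (Y x \<bullet> b) * (X x \<bullet> b))"
    by (subst euclidean_inner) (simp add: mult.commute)
  show "integrable M (\<lambda>x. X x \<bullet> Y x)" unfolding inner_eq using int_b by simp
  show "integral\<^sup>L M (\<lambda>x. X x \<bullet> Y x) = 0" unfolding inner_eq using int_b int_b_zero by simp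
qed

section \<open>Expected descent along the iterates\<close>

definition sps_noise_conditions :: "'m measure \<Rightarrow> nat \<Rightarrow> (nat \<Rightarrow> 'a::euclidean_space \<Rightarrow> 'a set)
    \<Rightarrow> ('a \<Rightarrow> 'a) \<Rightarrow> real \<Rightarrow> real \<Rightarrow> real \<Rightarrow> 'a \<Rightarrow> (nat \<Rightarrow> 'a) \<Rightarrow> (nat \<Rightarrow> 'm \<Rightarrow> 'a) \<Rightarrow> (nat \<Rightarrow> 'm \<Rightarrow> 'a)
    \<Rightarrow> real \<Rightarrow> real \<Rightarrow> real \<Rightarrow> real \<Rightarrow> nat \<Rightarrow> bool" where
  "sps_noise_conditions M n A B \<tau> \<rho> \<alpha> z1 w1 \<epsilon> e N1 N2 N3 N4 K \<longleftrightarrow>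
    (\<forall>k\<in>{1..K}.
      \<epsilon> k \<in> borel_measurable M \<and> e k \<in> borel_measurable M \<and>
      integrable M (\<epsilon> k) \<and> integrable M (e k) \<and>
      (\<forall>b\<in>Basis. AE \<omega> in M.
         real_cond_exp M (sps_F M n A B \<tau> \<rho> \<alpha> z1 w1 \<epsilon> e k) (\<lambda>\<omega>. \<epsilon> k \<omega> \<bullet> b) \<omega> = 0) \<and>
      (\<forall>b\<in>Basis. AE \<omega> in M.
         real_cond_exp M (sps_F M n A B \<tau> \<rho> \<alpha> z1 w1 \<epsilon> e k) (\<lambda>\<omega>. e k \<omega> \<bullet> b) \<omega> = 0) \<and>
      (AE \<omega> in M.
         nn_cond_exp M (sps_F M n A B \<tau> \<rho> \<alpha> z1 w1 \<epsilon> e k)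
           (\<lambda>\<omega>. ennreal ((norm (\<epsilon> k \<omega>))\<^sup>2)) \<omega>
         \<le> ennreal (N1 + N2 * (norm (B (sps_z n A B \<tau> \<rho> \<alpha> z1 w1 \<epsilon> e k \<omega>)))\<^sup>2)) \<and>
      (AE \<omega> in M.
         nn_cond_exp M (sps_FE M n A B \<tau> \<rho> \<alpha> z1 w1 \<epsilon> e k)
           (\<lambda>\<omega>. ennreal ((norm (e k \<omega>))\<^sup>2)) \<omega>
         \<le> ennreal (N3 + N4 * (norm (B (sps_x n A B \<tau> \<rho>
               (sps_z n A B \<tau> \<rho> \<alpha> z1 w1 \<epsilon> e k \<omega>) (sps_w n A B \<tau> \<rho> \<alpha> z1 w1 \<epsilon> e k \<omega>)
               (\<epsilon> k \<omega>) (n + 1))))\<^sup>2)))"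

locale sps_noise_model = sps_problem n A B \<tau> L zs ws
  for n :: nat and A :: "nat \<Rightarrow> 'a::euclidean_space \<Rightarrow> 'a set" and B \<tau> L zs ws +
  fixes Cf N1 N2 N3 N4 :: real and z1 :: 'a and w1 :: "nat \<Rightarrow> 'a"
  assumes Cf: "0 < Cf" and N: "0 \<le> N1" "0 \<le> N2" "0 \<le> N3" "0 \<le> N4"
    and w1_sum: "(\<Sum>i=1..n+1. w1 i) = 0"
begin

(* Slopes and offsets of the affine bounds on E|\<epsilon>^k|^2 and E|e^k|^2 in terms of E V_k, and
   the resulting drift E V_(k+1) \<le> (1 + drift_P / K) E V_k + drift_Q / K. *)
definition "eps_slope = 2 * N2 * L\<^sup>2"
definition "eps_offset = N1 + 2 * N2 * (norm (B zs))\<^sup>2"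
definition "e_slope = 2 * N4 * growth_const\<^sup>2 * (1 + eps_slope)"
definition "e_offset = N3 + N4 * (2 * growth_const\<^sup>2 * eps_offset + 2 * (norm (B zs))\<^sup>2)"
definition "drift_P = 2 * L * Cf * eps_slope + Cf\<^sup>2 * update_const * (1 + eps_slope + e_slope)"
definition "drift_Q = 2 * L * Cf * eps_offset + Cf\<^sup>2 * update_const * (eps_offset + e_offset)"

definition rate_const :: real where
  "rate_const =
    (sps_lyapunov n zs ws z1 w1 + drift_P * (sps_lyapunov n zs ws z1 w1 + drift_Q) * exp drift_P + drift_Q)
      / (2 * descent_const * Cf * min 1 (1 / (8 * L ^ 3)))"

lemma noise_consts_nonneg:
  "0 \<le> eps_slope" "0 \<le> eps_offset" "0 \<le> e_slope" "0 \<le> e_offset" "0 \<le> drift_P" "0 \<le> drift_Q"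
  unfolding eps_slope_def eps_offset_def e_slope_def e_offset_def drift_P_def drift_Q_def
  using N Cf L_pos update_const_nonneg by auto

end

locale sps_run = sps_noise_model n A B \<tau> L zs ws Cf N1 N2 N3 N4 z1 w1
  for n :: nat and A :: "nat \<Rightarrow> 'a::euclidean_space \<Rightarrow> 'a set" and B \<tau> L zs ws Cf N1 N2 N3 N4 z1 w1 +
  fixes M :: "'m measure" and \<epsilon> e :: "nat \<Rightarrow> 'm \<Rightarrow> 'a" and K :: nat and \<rho> \<alpha> :: real
  assumes prob: "prob_space M" and K: "1 \<le> K"
    and rho: "0 < \<rho>" "\<rho> \<le> 1" "L * \<rho> \<le> 1/2" "\<rho> ^ 4 \<le> 1 / real K"
    and alpha: "\<alpha> = Cf * \<rho>\<^sup>2"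
    and noise: "sps_noise_conditions M n A B \<tau> \<rho> \<alpha> z1 w1 \<epsilon> e N1 N2 N3 N4 K"
begin

sublocale prob_space M by (rule prob)

abbreviation "Z \<equiv> sps_z n A B \<tau> \<rho> \<alpha> z1 w1 \<epsilon> e"
abbreviation "W \<equiv> sps_w n A B \<tau> \<rho> \<alpha> z1 w1 \<epsilon> e"
abbreviation "F \<equiv> sps_F M n A B \<tau> \<rho> \<alpha> z1 w1 \<epsilon> e"
abbreviation "FE \<equiv> sps_FE M n A B \<tau> \<rho> \<alpha> z1 w1 \<epsilon> e"

definition "V k \<omega> = sps_lyapunov n zs ws (Z k \<omega>) (W k \<omega>)"
definition "Res k \<omega> = sps_residual n A B \<tau> \<rho> (Z k \<omega>) (W k \<omega>) (\<epsilon> k \<omega>) (e k \<omega>)"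

lemma alpha_nonneg: "0 \<le> \<alpha>"
  unfolding alpha using Cf by simp

lemma stepsize_factors_le: "2 * \<alpha> * L * \<rho>\<^sup>2 \<le> 2 * L * Cf / real K" "\<alpha>\<^sup>2 \<le> Cf\<^sup>2 / real K"
proof -
  have "2 * \<alpha> * L * \<rho>\<^sup>2 = 2 * L * Cf * \<rho> ^ 4" unfolding alpha by (simp add: power2_eq_square power4_eq_xxxx)
  also have "\<dots> \<le> 2 * L * Cf * (1 / real K)" using rho(4) L_pos Cf by (intro mult_left_mono) auto
  finally show "2 * \<alpha> * L * \<rho>\<^sup>2 \<le> 2 * L * Cf / real K" by simp
  have "\<alpha>\<^sup>2 = Cf\<^sup>2 * \<rho> ^ 4" unfolding alpha by (simp add: power_mult_distrib power2_eq_square power4_eq_xxxx)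
  also have "\<dots> \<le> Cf\<^sup>2 * (1 / real K)" using rho(4) by (intro mult_left_mono) auto
  finally show "\<alpha>\<^sup>2 \<le> Cf\<^sup>2 / real K" by simp
qed

lemma noise_measurable:
  "k \<in> {1..K} \<Longrightarrow> \<epsilon> k \<in> borel_measurable M" "k \<in> {1..K} \<Longrightarrow> e k \<in> borel_measurable M"
  using noise unfolding sps_noise_conditions_def by blast+

lemma measurable_iterates:
  assumes "k \<in> {1..K+1}"
  shows "Z k \<in> borel_measurable M" "\<forall>i\<in>{1..n+1}. (\<lambda>\<omega>. W k \<omega> i) \<in> borel_measurable M"
  using measurable_sps_iterates[OF _ assms, of \<epsilon> M e] noise_measurable by blast+

lemma measurable_V:
  assumes "k \<in> {1..K+1}"
  shows "V k \<in> borel_measurable M"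
proof -
  note Z = measurable_iterates(1)[OF assms] and W = measurable_iterates(2)[OF assms]
  have "(\<lambda>\<omega>. \<Sum>i=1..n+1. (norm (W k \<omega> i - ws i))\<^sup>2) \<in> borel_measurable M"
  proof (intro borel_measurable_sum)
    fix i assume "i \<in> {1..n+1}"
    then have "(\<lambda>\<omega>. W k \<omega> i) \<in> borel_measurable M" using W by blast
    then show "(\<lambda>\<omega>. (norm (W k \<omega> i - ws i))\<^sup>2) \<in> borel_measurable M" by measurable
  qed
  then show ?thesis unfolding V_def sps_lyapunov_def using Z by measurable
qed

lemma V_nonneg: "0 \<le> V k \<omega>"
  unfolding V_def by (rule sps_lyapunov_ge(1))

lemma Res_nonneg: "0 \<le> Res k \<omega>"
  unfolding Res_def by (rule sps_residual_nonneg)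

lemma filtration_subalgebra:
  assumes k: "k \<in> {1..K}"
  shows "subalgebra M (F k)" "subalgebra M (FE k)"
    "Z k \<in> borel_measurable (F k)" "\<forall>i\<in>{1..n+1}. (\<lambda>\<omega>. W k \<omega> i) \<in> borel_measurable (F k)"
proof -
  define G where "G = {Z j | j. 1 \<le> j \<and> j \<le> k} \<union>
    {(\<lambda>\<omega>. W j \<omega> i) | j i. 1 \<le> j \<and> j \<le> k \<and> 1 \<le> i \<and> i \<le> n + 1}"
  have G: "\<forall>f\<in>G. f \<in> borel_measurable M"
    unfolding G_def using k measurable_iterates by fastforce
  have F_eq: "F k = sigma_gen M G" unfolding sps_F_def G_def ..
  note F_gen = sigma_gen_subalgebra[OF G, folded F_eq]
  show "subalgebra M (F k)" by (rule F_gen(1))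
  show "Z k \<in> borel_measurable (F k)" using k by (intro F_gen(2)) (auto simp: G_def)
  show "\<forall>i\<in>{1..n+1}. (\<lambda>\<omega>. W k \<omega> i) \<in> borel_measurable (F k)"
  proof
    fix i assume "i \<in> {1..n+1}"
    then have "(\<lambda>\<omega>. W k \<omega> i) \<in> G" using k unfolding G_def by simp blast
    then show "(\<lambda>\<omega>. W k \<omega> i) \<in> borel_measurable (F k)" by (rule F_gen(2))
  qed
  have "FE k = sigma_gen M (G \<union> {\<epsilon> k})" unfolding sps_FE_def G_def ..
  moreover have "\<forall>f\<in>G \<union> {\<epsilon> k}. f \<in> borel_measurable M"
    using G noise_measurable(1)[OF k] by blast
  ultimately show "subalgebra M (FE k)" using sigma_gen_subalgebra(1) by metis
qed

lemma V_Suc: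
  assumes "1 \<le> k"
  shows "V (Suc k) \<omega> = sps_lyapunov n zs ws
    (fst (sps_step n A B \<tau> \<rho> \<alpha> (Z k \<omega>) (W k \<omega>) (\<epsilon> k \<omega>) (e k \<omega>)))
    (snd (sps_step n A B \<tau> \<rho> \<alpha> (Z k \<omega>) (W k \<omega>) (\<epsilon> k \<omega>) (e k \<omega>)))"
  unfolding V_def sps_zw_Suc[OF assms] ..

end

context sps_run
begin

context
  fixes k :: nat
  assumes k: "k \<in> {1..K}" and V_int: "integrable M (V k)"
begin

lemma k_bounds: "1 \<le> k" "k \<in> {1..K+1}" "Suc k \<in> {1..K+1}"
  using k by auto

lemma noise_at_k:
  "\<forall>b\<in>Basis. AE \<omega> in M. real_cond_exp M (F k) (\<lambda>\<omega>. \<epsilon> k \<omega> \<bullet> b) \<omega> = 0"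
  "\<forall>b\<in>Basis. AE \<omega> in M. real_cond_exp M (F k) (\<lambda>\<omega>. e k \<omega> \<bullet> b) \<omega> = 0"
  "AE \<omega> in M. nn_cond_exp M (F k) (\<lambda>\<omega>. ennreal ((norm (\<epsilon> k \<omega>))\<^sup>2)) \<omega>
     \<le> ennreal (N1 + N2 * (norm (B (Z k \<omega>)))\<^sup>2)"
  "AE \<omega> in M. nn_cond_exp M (FE k) (\<lambda>\<omega>. ennreal ((norm (e k \<omega>))\<^sup>2)) \<omega>
     \<le> ennreal (N3 + N4 * (norm (B (sps_x n A B \<tau> \<rho> (Z k \<omega>) (W k \<omega>) (\<epsilon> k \<omega>) (n + 1))))\<^sup>2)"
  using noise k unfolding sps_noise_conditions_def by blast+

lemma measurable_B_Z: "(\<lambda>\<omega>. B (Z k \<omega>)) \<in> borel_measurable M"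
  using measurable_compose[OF measurable_iterates(1)[OF k_bounds(2)] borel_measurable_B] .

lemma expected_norm_eps_sq:
  shows "integrable M (\<lambda>\<omega>. (norm (\<epsilon> k \<omega>))\<^sup>2)"
    and "(\<integral>\<omega>. (norm (\<epsilon> k \<omega>))\<^sup>2 \<partial>M) \<le> eps_slope * integral\<^sup>L M (V k) + eps_offset"
proof -
  have B_Z_le: "(norm (B (Z k \<omega>)))\<^sup>2 \<le> 2 * L\<^sup>2 * V k \<omega> + 2 * (norm (B zs))\<^sup>2" for \<omega>
    unfolding V_def by (rule norm_B_sq_le)
  have B_Z_int: "integrable M (\<lambda>\<omega>. (norm (B (Z k \<omega>)))\<^sup>2)"
    by (rule integrable_nonneg_le[OF _ _ _ B_Z_le]) (use V_int measurable_B_Z in auto)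
  note bound = integral_le_of_nn_cond_exp_le[OF prob filtration_subalgebra(1)[OF k]
      _ _ _ _ noise_at_k(3)]
  show eps_int: "integrable M (\<lambda>\<omega>. (norm (\<epsilon> k \<omega>))\<^sup>2)"
    by (rule bound(1)) (use noise_measurable(1)[OF k] B_Z_int N in auto)
  have "(\<integral>\<omega>. (norm (\<epsilon> k \<omega>))\<^sup>2 \<partial>M) \<le> (\<integral>\<omega>. N1 + N2 * (norm (B (Z k \<omega>)))\<^sup>2 \<partial>M)"
    by (rule bound(2)) (use noise_measurable(1)[OF k] B_Z_int N in auto)
  also have "\<dots> \<le> (\<integral>\<omega>. N1 + N2 * (2 * L\<^sup>2 * V k \<omega> + 2 * (norm (B zs))\<^sup>2) \<partial>M)"
    using B_Z_int V_int N B_Z_le by (intro integral_mono) (auto intro: mult_left_mono)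
  also have "\<dots> = eps_slope * integral\<^sup>L M (V k) + eps_offset"
    using V_int by (simp add: eps_slope_def eps_offset_def prob_space algebra_simps)
  finally show "(\<integral>\<omega>. (norm (\<epsilon> k \<omega>))\<^sup>2 \<partial>M) \<le> eps_slope * integral\<^sup>L M (V k) + eps_offset" .
qed


lemma expected_norm_e_sq:
  shows "integrable M (\<lambda>\<omega>. (norm (e k \<omega>))\<^sup>2)"
    and "(\<integral>\<omega>. (norm (e k \<omega>))\<^sup>2 \<partial>M) \<le> e_slope * integral\<^sup>L M (V k) + e_offset"
proof -
  define x where "x \<omega> = sps_x n A B \<tau> \<rho> (Z k \<omega>) (W k \<omega>) (\<epsilon> k \<omega>) (n + 1)" for \<omega>
  have "x \<in> borel_measurable M"
    unfolding x_def using measurable_iterates[OF k_bounds(2)] noise_measurable(1)[OF k]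
    by (intro measurable_sps_x) auto
  then have B_x: "(\<lambda>\<omega>. B (x \<omega>)) \<in> borel_measurable M"
    using measurable_compose borel_measurable_B by blast
  have B_x_le: "(norm (B (x \<omega>)))\<^sup>2 \<le> 2 * growth_const\<^sup>2 * (V k \<omega> + (norm (\<epsilon> k \<omega>))\<^sup>2) + 2 * (norm (B zs))\<^sup>2"
    for \<omega> unfolding V_def x_def by (rule norm_B_forward_sq_le[OF rho(1,2)])
  have B_x_int: "integrable M (\<lambda>\<omega>. (norm (B (x \<omega>)))\<^sup>2)"
    by (rule integrable_nonneg_le[OF _ _ _ B_x_le]) (use V_int expected_norm_eps_sq(1) B_x in auto)
  note bound = integral_le_of_nn_cond_exp_le[OF prob filtration_subalgebra(2)[OF k]
      _ _ _ _ noise_at_k(4)[folded x_def]]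
  show "integrable M (\<lambda>\<omega>. (norm (e k \<omega>))\<^sup>2)"
    by (rule bound(1)) (use noise_measurable(2)[OF k] B_x_int N in auto)
  have "(\<integral>\<omega>. (norm (e k \<omega>))\<^sup>2 \<partial>M) \<le> (\<integral>\<omega>. N3 + N4 * (norm (B (x \<omega>)))\<^sup>2 \<partial>M)"
    by (rule bound(2)) (use noise_measurable(2)[OF k] B_x_int N in auto)
  also have "\<dots> \<le> (\<integral>\<omega>. N3 + N4 * (2 * growth_const\<^sup>2 * (V k \<omega> + (norm (\<epsilon> k \<omega>))\<^sup>2)
      + 2 * (norm (B zs))\<^sup>2) \<partial>M)"
    using B_x_int V_int expected_norm_eps_sq(1) N B_x_le
    by (intro integral_mono) (auto intro: mult_left_mono)
  also have "\<dots> = N3 + N4 * (2 * growth_const\<^sup>2 * (integral\<^sup>L M (V k) + (\<integral>\<omega>. (norm (\<epsilon> k \<omega>))\<^sup>2 \<partial>M))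
      + 2 * (norm (B zs))\<^sup>2)"
    using V_int expected_norm_eps_sq(1) by (simp add: prob_space)
  also have "\<dots> \<le> N3 + N4 * (2 * growth_const\<^sup>2 * (integral\<^sup>L M (V k)
      + (eps_slope * integral\<^sup>L M (V k) + eps_offset)) + 2 * (norm (B zs))\<^sup>2)"
    using expected_norm_eps_sq(2) N by (intro add_left_mono add_right_mono mult_left_mono) auto
  also have "\<dots> = e_slope * integral\<^sup>L M (V k) + e_offset"
    by (simp add: e_slope_def e_offset_def algebra_simps)
  finally show "(\<integral>\<omega>. (norm (e k \<omega>))\<^sup>2 \<partial>M) \<le> e_slope * integral\<^sup>L M (V k) + e_offset" .
qed

abbreviation "U \<omega> \<equiv> sps_update_sqnorm n A B \<tau> \<rho> (Z k \<omega>) (W k \<omega>) (\<epsilon> k \<omega>) (e k \<omega>)"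

lemma expected_update_sqnorm:
  shows "integrable M U"
    and "integral\<^sup>L M U \<le> update_const * ((1 + eps_slope + e_slope) * integral\<^sup>L M (V k)
      + eps_offset + e_offset)"
proof -
  have "U \<in> borel_measurable M"
    using measurable_iterates[OF k_bounds(2)] noise_measurable[OF k] by (intro measurable_sps_update_sqnorm)
  moreover have U_le: "U \<omega> \<le> update_const * (V k \<omega> + (norm (\<epsilon> k \<omega>))\<^sup>2 + (norm (e k \<omega>))\<^sup>2)" for \<omega>
    unfolding V_def by (rule update_sqnorm_le[OF rho(1,2)])
  ultimately show U_int: "integrable M U"
    using V_int expected_norm_eps_sq(1) expected_norm_e_sq(1)
    by (intro integrable_nonneg_le[OF _ _ sps_update_sqnorm_nonneg U_le]) auto
  have "integral\<^sup>L M U \<le> (\<integral>\<omega>. update_const * (V k \<omega> + (norm (\<epsilon> k \<omega>))\<^sup>2 + (norm (e k \<omega>))\<^sup>2) \<partial>M)"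
    using U_int V_int expected_norm_eps_sq(1) expected_norm_e_sq(1) U_le by (intro integral_mono) auto
  also have "\<dots> = update_const * (integral\<^sup>L M (V k) + (\<integral>\<omega>. (norm (\<epsilon> k \<omega>))\<^sup>2 \<partial>M)
      + (\<integral>\<omega>. (norm (e k \<omega>))\<^sup>2 \<partial>M))"
    using V_int expected_norm_eps_sq(1) expected_norm_e_sq(1) by simp
  also have "\<dots> \<le> update_const * (integral\<^sup>L M (V k) + (eps_slope * integral\<^sup>L M (V k) + eps_offset)
      + (e_slope * integral\<^sup>L M (V k) + e_offset))"
    using expected_norm_eps_sq(2) expected_norm_e_sq(2) update_const_nonneg
    by (intro mult_left_mono add_mono) auto
  finally show "integral\<^sup>L M U \<le> update_const * ((1 + eps_slope + e_slope) * integral\<^sup>L M (V k)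
      + eps_offset + e_offset)"
    by (simp add: algebra_simps)
qed

lemma integrable_V_Suc: "integrable M (V (Suc k))"
proof (rule integrable_nonneg_le[OF _ measurable_V[OF k_bounds(3)] V_nonneg])
  show "V (Suc k) \<omega> \<le> 2 * V k \<omega> + 2 * \<alpha>\<^sup>2 * U \<omega>" for \<omega>
    unfolding V_Suc[OF k_bounds(1)] unfolding V_def by (rule sps_step_lyapunov_le)
qed (use V_int expected_update_sqnorm(1) in simp)


lemma integrable_Res: "integrable M (Res k)"
proof -
  have "Res k \<in> borel_measurable M"
    unfolding Res_def using measurable_iterates[OF k_bounds(2)] noise_measurable[OF k]
    by (intro measurable_sps_residual)
  moreover have "Res k \<omega> \<le> residual_const * (V k \<omega> + (norm (\<epsilon> k \<omega>))\<^sup>2)" for \<omega>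
    unfolding Res_def V_def by (rule residual_le[OF rho(1,2)])
  ultimately show ?thesis
    using V_int expected_norm_eps_sq(1)
    by (intro integrable_nonneg_le[where g="\<lambda>\<omega>. residual_const * (V k \<omega> + (norm (\<epsilon> k \<omega>))\<^sup>2)",
          OF _ _ Res_nonneg]) auto
qed

lemma expected_noise_cross_terms:
  shows "integrable M (\<lambda>\<omega>. \<epsilon> k \<omega> \<bullet> (B (Z k \<omega>) - W k \<omega> (n + 1)))"
    and "(\<integral>\<omega>. \<epsilon> k \<omega> \<bullet> (B (Z k \<omega>) - W k \<omega> (n + 1)) \<partial>M) = 0"
    and "integrable M (\<lambda>\<omega>. e k \<omega> \<bullet> (Z k \<omega> - zs))"
    and "(\<integral>\<omega>. e k \<omega> \<bullet> (Z k \<omega> - zs) \<partial>M) = 0"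
proof -
  note sub = filtration_subalgebra[OF k]
  have u_F: "(\<lambda>\<omega>. B (Z k \<omega>) - W k \<omega> (n + 1)) \<in> borel_measurable (F k)"
  proof -
    have "(\<lambda>\<omega>. W k \<omega> (n + 1)) \<in> borel_measurable (F k)" using sub(4) by simp
    then show ?thesis using measurable_compose[OF sub(3) borel_measurable_B] by measurable
  qed
  have u_le: "(norm (B (Z k \<omega>) - W k \<omega> (n + 1)))\<^sup>2 \<le> Res k \<omega>" for \<omega>
  proof -
    have "0 \<le> (\<Sum>i=1..n. (norm (sps_y n A B \<tau> \<rho> (Z k \<omega>) (W k \<omega>) (\<epsilon> k \<omega>) (e k \<omega>) i - W k \<omega> i))\<^sup>2)
        + (\<Sum>i=1..n. (norm (Z k \<omega> - sps_x n A B \<tau> \<rho> (Z k \<omega>) (W k \<omega>) (\<epsilon> k \<omega>) i))\<^sup>2)"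
      by (intro add_nonneg_nonneg sum_nonneg) auto
    then show ?thesis unfolding Res_def sps_residual_def by linarith
  qed
  have "(\<lambda>\<omega>. (norm (B (Z k \<omega>) - W k \<omega> (n + 1)))\<^sup>2) \<in> borel_measurable M"
    using measurable_from_subalg[OF sub(1) u_F] by measurable
  then have u_int: "integrable M (\<lambda>\<omega>. (norm (B (Z k \<omega>) - W k \<omega> (n + 1)))\<^sup>2)"
    by (rule integrable_nonneg_le[OF integrable_Res _ _ u_le]) simp_all
  note eps = integral_inner_cond_exp_zero[OF prob sub(1) noise_measurable(1)[OF k] u_F
      expected_norm_eps_sq(1) u_int noise_at_k(1)]
  show "integrable M (\<lambda>\<omega>. \<epsilon> k \<omega> \<bullet> (B (Z k \<omega>) - W k \<omega> (n + 1)))" by (rule eps(1))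
  show "(\<integral>\<omega>. \<epsilon> k \<omega> \<bullet> (B (Z k \<omega>) - W k \<omega> (n + 1)) \<partial>M) = 0" by (rule eps(2))
  have d_F: "(\<lambda>\<omega>. Z k \<omega> - zs) \<in> borel_measurable (F k)"
    using sub(3) by (intro borel_measurable_diff borel_measurable_const)
  have d_le: "(norm (Z k \<omega> - zs))\<^sup>2 \<le> V k \<omega>" for \<omega> unfolding V_def by (rule sps_lyapunov_ge(2))
  have "(\<lambda>\<omega>. (norm (Z k \<omega> - zs))\<^sup>2) \<in> borel_measurable M"
    using measurable_from_subalg[OF sub(1) d_F] by measurable
  then have d_int: "integrable M (\<lambda>\<omega>. (norm (Z k \<omega> - zs))\<^sup>2)"
    by (rule integrable_nonneg_le[OF V_int _ _ d_le]) simp_all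
  note ee = integral_inner_cond_exp_zero[OF prob sub(1) noise_measurable(2)[OF k] d_F
      expected_norm_e_sq(1) d_int noise_at_k(2)]
  show "integrable M (\<lambda>\<omega>. e k \<omega> \<bullet> (Z k \<omega> - zs))" by (rule ee(1))
  show "(\<integral>\<omega>. e k \<omega> \<bullet> (Z k \<omega> - zs) \<partial>M) = 0" by (rule ee(2))
qed


lemma expected_descent_perturbed:
  "integral\<^sup>L M (V (Suc k)) + 2 * \<alpha> * descent_const * \<rho> * integral\<^sup>L M (Res k)
     \<le> integral\<^sup>L M (V k) + 2 * \<alpha> * L * \<rho>\<^sup>2 * (\<integral>\<omega>. (norm (\<epsilon> k \<omega>))\<^sup>2 \<partial>M) + \<alpha>\<^sup>2 * integral\<^sup>L M U"
proof -
  define c where "c = 2 * \<alpha> * \<rho> * (1 - 2 * L * \<rho>)"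
  note cross = expected_noise_cross_terms
  have "V (Suc k) \<omega> + 2 * \<alpha> * descent_const * \<rho> * Res k \<omega>
      \<le> V k \<omega> - c * (\<epsilon> k \<omega> \<bullet> (B (Z k \<omega>) - W k \<omega> (n + 1))) + 2 * \<alpha> * L * \<rho>\<^sup>2 * (norm (\<epsilon> k \<omega>))\<^sup>2
        - 2 * \<alpha> * (e k \<omega> \<bullet> (Z k \<omega> - zs)) + \<alpha>\<^sup>2 * U \<omega>" for \<omega>
    using lyapunov_descent[OF rho(1,2,3) alpha_nonneg sps_w_sum_zero[where A=A and B=B and \<tau>=\<tau>
        and \<rho>=\<rho> and \<alpha>=\<alpha> and \<epsilon>=\<epsilon> and e=e and \<omega>=\<omega>, OF w1_sum k_bounds(1)],
        where z="Z k \<omega>" and eps="\<epsilon> k \<omega>" and ee="e k \<omega>"]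
    unfolding V_Suc[OF k_bounds(1)] unfolding V_def Res_def c_def
    by (simp add: inner_commute mult.assoc)
  then have "integral\<^sup>L M (\<lambda>\<omega>. V (Suc k) \<omega> + 2 * \<alpha> * descent_const * \<rho> * Res k \<omega>)
      \<le> integral\<^sup>L M (\<lambda>\<omega>. V k \<omega> - c * (\<epsilon> k \<omega> \<bullet> (B (Z k \<omega>) - W k \<omega> (n + 1)))
        + 2 * \<alpha> * L * \<rho>\<^sup>2 * (norm (\<epsilon> k \<omega>))\<^sup>2 - 2 * \<alpha> * (e k \<omega> \<bullet> (Z k \<omega> - zs)) + \<alpha>\<^sup>2 * U \<omega>)"
    using integrable_V_Suc integrable_Res V_int cross(1,3) expected_norm_eps_sq(1)
      expected_update_sqnorm(1)
    by (intro integral_mono) auto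
  then show ?thesis
    using integrable_V_Suc integrable_Res V_int cross expected_norm_eps_sq(1)
      expected_update_sqnorm(1)
    by simp
qed

lemma expected_descent:
  "integral\<^sup>L M (V (Suc k)) + 2 * \<alpha> * descent_const * \<rho> * integral\<^sup>L M (Res k)
     \<le> (1 + drift_P / real K) * integral\<^sup>L M (V k) + drift_Q / real K"
proof -
  define c2 where "c2 = 2 * \<alpha> * L * \<rho>\<^sup>2"
  define EV E\<epsilon> EU where "EV = integral\<^sup>L M (V k)" and "E\<epsilon> = (\<integral>\<omega>. (norm (\<epsilon> k \<omega>))\<^sup>2 \<partial>M)"
    and "EU = integral\<^sup>L M U"
  note c2_le = stepsize_factors_le(1)[folded c2_def] and alpha_sq_le = stepsize_factors_le(2)
  have nonneg: "0 \<le> c2" "0 \<le> E\<epsilon>" "0 \<le> EU"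
    unfolding c2_def E\<epsilon>_def EU_def using alpha_nonneg L_pos
    by (auto intro!: integral_nonneg_AE AE_I2 sps_update_sqnorm_nonneg)
  have "c2 * E\<epsilon> \<le> (2 * L * Cf / real K) * (eps_slope * EV + eps_offset)"
    using c2_le expected_norm_eps_sq(2) nonneg unfolding EV_def E\<epsilon>_def by (intro mult_mono) auto
  moreover have "\<alpha>\<^sup>2 * EU \<le> (Cf\<^sup>2 / real K)
      * (update_const * ((1 + eps_slope + e_slope) * EV + eps_offset + e_offset))"
    using alpha_sq_le expected_update_sqnorm(2) nonneg unfolding EV_def EU_def
    by (intro mult_mono) auto
  ultimately have "EV + c2 * E\<epsilon> + \<alpha>\<^sup>2 * EU
      \<le> EV + (2 * L * Cf / real K) * (eps_slope * EV + eps_offset)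
        + (Cf\<^sup>2 / real K) * (update_const * ((1 + eps_slope + e_slope) * EV + eps_offset + e_offset))"
    by simp
  also have "\<dots> = (1 + drift_P / real K) * EV + drift_Q / real K"
    unfolding drift_P_def drift_Q_def using K by (simp add: field_simps)
  finally show ?thesis using expected_descent_perturbed unfolding EV_def E\<epsilon>_def EU_def c2_def by simp
qed

end

end

section \<open>Summing the descent inequalities\<close>

lemma perturbed_descent_bounded:
  fixes v :: "nat \<Rightarrow> real" and K :: nat and P Q :: real
  assumes K: "1 \<le> K" and P: "0 \<le> P" and Q: "0 \<le> Q" and v1: "0 \<le> v 1"
    and step: "\<And>k. k \<in> {1..K} \<Longrightarrow> v (Suc k) \<le> (1 + P / real K) * v k + Q / real K"
    and k: "k \<in> {1..K}"
  shows "v k \<le> (v 1 + Q) * exp P"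
proof -
  define r where "r = 1 + P / real K"
  have r: "1 \<le> r" unfolding r_def using P by simp
  have growth: "v (Suc j) \<le> (v 1 + real j * Q / real K) * r ^ j" if "j \<le> K" for j
    using that
  proof (induction j)
    case 0
    then show ?case by simp
  next
    case (Suc j)
    have "v (Suc (Suc j)) \<le> r * v (Suc j) + Q / real K"
      using step[of "Suc j"] Suc.prems unfolding r_def by simp
    also have "\<dots> \<le> r * ((v 1 + real j * Q / real K) * r ^ j) + Q / real K * r ^ Suc j"
    proof (rule add_mono)
      show "r * v (Suc j) \<le> r * ((v 1 + real j * Q / real K) * r ^ j)"
        using Suc r by (intro mult_left_mono) auto
      show "Q / real K \<le> Q / real K * r ^ Suc j"
        using mult_left_mono[OF one_le_power[OF r, of "Suc j"], of "Q / real K"] Q by simp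
    qed
    also have "\<dots> = (v 1 + real (Suc j) * Q / real K) * r ^ Suc j"
      by (simp add: algebra_simps add_divide_distrib)
    finally show ?case .
  qed
  obtain j where j: "k = Suc j" "j \<le> K" using k by (cases k) auto
  have "real j * Q \<le> real K * Q" using j Q by (intro mult_right_mono) auto
  then have "real j * Q / real K \<le> Q" using K by (simp add: divide_le_eq mult.commute)
  then have "v k \<le> (v 1 + Q) * r ^ K"
    using growth[OF j(2)] v1 Q r j power_increasing[OF j(2) r]
    by (smt (verit, best) mult_mono zero_le_power)
  also have "r ^ K \<le> exp P"
    unfolding r_def using exp_ge_one_plus_x_over_n_power_n[of K P] P K by simp
  finally show ?thesis using v1 Q by (simp add: mult_left_mono)
qed

(* A discrete Gronwall argument: telescoping the descent inequalities leaves the perturbation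
   terms, which perturbed_descent_bounded controls. *)
lemma perturbed_descent_sum_le:
  fixes v u :: "nat \<Rightarrow> real" and K :: nat and P Q :: real
  assumes K: "1 \<le> K" and P: "0 \<le> P" and Q: "0 \<le> Q"
    and step: "\<And>k. k \<in> {1..K} \<Longrightarrow> v (Suc k) + u k \<le> (1 + P / real K) * v k + Q / real K"
    and v: "\<And>k. k \<in> {1..K+1} \<Longrightarrow> 0 \<le> v k"
    and u: "\<And>k. k \<in> {1..K} \<Longrightarrow> 0 \<le> u k"
  shows "(\<Sum>k=1..K. u k) \<le> v 1 + P * (v 1 + Q) * exp P + Q"
proof -
  have v_le: "v k \<le> (v 1 + Q) * exp P" if "k \<in> {1..K}" for k
    using step u v[of 1] K by (intro perturbed_descent_bounded[OF K P Q _ _ that]) force+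
  have "(\<Sum>k=1..K. u k) \<le> (\<Sum>k=1..K. (v k - v (Suc k)) + (P / real K * v k + Q / real K))"
    using step by (intro sum_mono) (simp add: algebra_simps)
  also have "\<dots> = (v 1 - v (Suc K)) + (P / real K * (\<Sum>k=1..K. v k) + Q)"
    using sum_Suc_diff[of 1 K v] K
    by (simp add: sum.distrib sum_distrib_left sum_subtractf)
  also have "P / real K * (\<Sum>k=1..K. v k) \<le> P / real K * (real K * ((v 1 + Q) * exp P))"
    using sum_bounded_above[of "{1..K}" v] v_le P by (intro mult_left_mono) auto
  finally show ?thesis using v[of "Suc K"] K by simp
qed

lemma sps_stepsize_bounds:
  fixes K :: nat and L :: real
  assumes K: "1 \<le> K" and L: "0 < L"
  defines "\<rho> \<equiv> min (real K powr (-1/4)) (1 / (2 * L))"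
  shows "0 < \<rho>" "\<rho> \<le> 1" "L * \<rho> \<le> 1/2" "\<rho> ^ 4 \<le> 1 / real K"
    and "min 1 (1 / (8 * L ^ 3)) * real K powr (1/4) \<le> \<rho> ^ 3 * real K"
proof -
  define p where "p = real K powr (-1/4)"
  have "real K powr (-1/4) \<le> real K powr 0" using K by (intro powr_mono) auto
  then have p: "0 < p" "p \<le> 1" unfolding p_def using K by auto
  have rho_eq: "\<rho> = min p (1 / (2 * L))" unfolding \<rho>_def p_def ..
  show rho_pos: "0 < \<rho>" "\<rho> \<le> 1" unfolding rho_eq using p L by auto
  show "L * \<rho> \<le> 1/2" unfolding rho_eq using L by (simp add: min_def field_simps)
  have p_pow: "p ^ 4 = 1 / real K" "p ^ 3 * real K = real K powr (1/4)"
  proof -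
    have "p ^ 4 = real K powr (real 4 * (-1/4))" unfolding p_def using K by (intro powr_power) auto
    then show "p ^ 4 = 1 / real K" using K by (simp add: powr_minus_divide)
    have "p ^ 3 = real K powr (real 3 * (-1/4))" unfolding p_def using K by (intro powr_power) auto
    moreover have "real K powr (-3/4) * real K powr 1 = real K powr (1/4)"
      by (subst powr_add[symmetric]) simp
    ultimately show "p ^ 3 * real K = real K powr (1/4)" using K by simp
  qed
  show "\<rho> ^ 4 \<le> 1 / real K"
    unfolding p_pow(1)[symmetric] rho_eq using rho_pos(1)[unfolded rho_eq] by (intro power_mono) auto
  show "min 1 (1 / (8 * L ^ 3)) * real K powr (1/4) \<le> \<rho> ^ 3 * real K"
  proof (cases "p \<le> 1 / (2 * L)")
    case True
    have "min 1 (1 / (8 * L ^ 3)) * real K powr (1/4) \<le> 1 * real K powr (1/4)"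
      by (intro mult_right_mono) auto
    then show ?thesis unfolding rho_eq using True p_pow(2) by simp
  next
    case False
    then have "\<rho> ^ 3 * real K = 1 / (8 * L ^ 3) * real K"
      unfolding rho_eq by (simp add: power_divide power_mult_distrib)
    moreover have "real K powr (1/4) \<le> real K powr 1" using K by (intro powr_mono) auto
    then have "real K powr (1/4) \<le> real K" using K by simp
    moreover have "min 1 (1 / (8 * L ^ 3)) \<le> 1 / (8 * L ^ 3)" "0 \<le> min 1 (1 / (8 * L ^ 3))"
      using L by auto
    ultimately show ?thesis using mult_mono[of "min 1 (1 / (8 * L ^ 3))" "1 / (8 * L ^ 3)"
        "real K powr (1/4)" "real K"] by simp
  qed
qed

context sps_run
begin

lemma V_1: "V 1 = (\<lambda>\<omega>. sps_lyapunov n zs ws z1 w1)"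
  unfolding V_def by simp

lemma integrable_V: "k \<in> {1..K+1} \<Longrightarrow> integrable M (V k)"
proof (induction k)
  case 0
  then show ?case by simp
next
  case (Suc k)
  show ?case
  proof (cases "k = 0")
    case True
    then show ?thesis using V_1 by simp
  next
    case False
    then have "k \<in> {1..K}" using Suc.prems by simp
    with Suc.IH show ?thesis using integrable_V_Suc by simp
  qed
qed

lemma sum_expected_residual_le:
  "(\<Sum>k=1..K. integral\<^sup>L M (Res k)) * (2 * Cf * descent_const * \<rho> ^ 3)
    \<le> sps_lyapunov n zs ws z1 w1 + drift_P * (sps_lyapunov n zs ws z1 w1 + drift_Q) * exp drift_P
      + drift_Q"
proof -
  define v u where "v k = integral\<^sup>L M (V k)" and "u k = 2 * \<alpha> * descent_const * \<rho> * integral\<^sup>L M (Res k)"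
    for k
  have "(\<Sum>k=1..K. u k) \<le> v 1 + drift_P * (v 1 + drift_Q) * exp drift_P + drift_Q"
  proof (rule perturbed_descent_sum_le[OF K noise_consts_nonneg(5,6)])
    show "v (Suc k) + u k \<le> (1 + drift_P / real K) * v k + drift_Q / real K" if "k \<in> {1..K}" for k
      unfolding u_def v_def using expected_descent[OF that integrable_V] that by simp
    show "0 \<le> v k" for k unfolding v_def using V_nonneg by (intro integral_nonneg_AE) auto
    show "0 \<le> u k" for k
      unfolding u_def using alpha_nonneg descent_const_pos rho Res_nonneg
      by (intro mult_nonneg_nonneg integral_nonneg_AE) auto
  qed
  moreover have "(\<Sum>k=1..K. u k) = (\<Sum>k=1..K. integral\<^sup>L M (Res k)) * (2 * Cf * descent_const * \<rho> ^ 3)"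
    unfolding u_def alpha sum_distrib_right by (intro sum.cong) (simp_all add: power2_eq_square power3_eq_cube)
  moreover have "v 1 = sps_lyapunov n zs ws z1 w1" unfolding v_def V_1 by (simp add: prob_space)
  ultimately show ?thesis by simp
qed

lemma sum_nn_integral_sps_O:
  "(\<Sum>j=1..K. \<integral>\<^sup>+ \<omega>. ennreal (sps_O n A B \<tau> \<rho> \<alpha> z1 w1 \<epsilon> e j \<omega>) \<partial>M)
    = ennreal (\<Sum>j=1..K. integral\<^sup>L M (Res j))"
proof -
  have "sps_O n A B \<tau> \<rho> \<alpha> z1 w1 \<epsilon> e j = Res j" for j
    unfolding sps_O_def Res_def sps_residual_def Let_def ..
  moreover have "(\<integral>\<^sup>+ \<omega>. ennreal (Res j \<omega>) \<partial>M) = ennreal (integral\<^sup>L M (Res j))" if "j \<in> {1..K}" for j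
    using that integrable_V[of j] integrable_Res[of j] Res_nonneg
    by (intro nn_integral_eq_integral) auto
  ultimately have "(\<Sum>j=1..K. \<integral>\<^sup>+ \<omega>. ennreal (sps_O n A B \<tau> \<rho> \<alpha> z1 w1 \<epsilon> e j \<omega>) \<partial>M)
      = (\<Sum>j=1..K. ennreal (integral\<^sup>L M (Res j)))"
    by (intro sum.cong) auto
  also have "\<dots> = ennreal (\<Sum>j=1..K. integral\<^sup>L M (Res j))"
    using Res_nonneg by (intro sum_ennreal integral_nonneg_AE) auto
  finally show ?thesis .
qed

lemma average_residual_le:
  assumes rate: "min 1 (1 / (8 * L ^ 3)) * real K powr (1/4) \<le> \<rho> ^ 3 * real K"
  shows "ennreal (1 / real K) * (\<Sum>j=1..K. \<integral>\<^sup>+ \<omega>. ennreal (sps_O n A B \<tau> \<rho> \<alpha> z1 w1 \<epsilon> e j \<omega>) \<partial>M)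
    \<le> ennreal (rate_const * real K powr (-1/4))"
proof -
  define S where "S = (\<Sum>j=1..K. integral\<^sup>L M (Res j))"
  define m where "m = min 1 (1 / (8 * L ^ 3))"
  have S_nonneg: "0 \<le> S" unfolding S_def using Res_nonneg by (intro sum_nonneg integral_nonneg_AE) auto
  have pos: "0 < m" "0 < 2 * descent_const * Cf" "0 < real K" "0 < real K powr (1/4)"
    unfolding m_def using L_pos Cf descent_const_pos K by auto
  have "S * (2 * descent_const * Cf) * (m * real K powr (1/4))
      \<le> S * (2 * descent_const * Cf) * (\<rho> ^ 3 * real K)"
    using rate S_nonneg pos unfolding m_def by (intro mult_left_mono) auto
  also have "\<dots> \<le> (rate_const * (2 * descent_const * Cf * m)) * real K"
  proof -
    have "rate_const * (2 * descent_const * Cf * m) = sps_lyapunov n zs ws z1 w1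
        + drift_P * (sps_lyapunov n zs ws z1 w1 + drift_Q) * exp drift_P + drift_Q"
      unfolding rate_const_def m_def[symmetric] using pos Cf descent_const_pos by simp
    then have "S * (2 * Cf * descent_const * \<rho> ^ 3) \<le> rate_const * (2 * descent_const * Cf * m)"
      using sum_expected_residual_le unfolding S_def by simp
    from mult_right_mono[OF this, of "real K"] show ?thesis by (simp add: algebra_simps)
  qed
  finally have "(S * real K powr (1/4)) * (2 * descent_const * Cf * m)
      \<le> (rate_const * real K) * (2 * descent_const * Cf * m)"
    by (simp add: algebra_simps)
  then have "S * real K powr (1/4) \<le> rate_const * real K"
    using pos by (simp add: mult_le_cancel_right_pos)
  then have "S / real K \<le> rate_const / real K powr (1/4)"
    using pos(3,4) by (simp add: field_simps)
  then have "1 / real K * S \<le> rate_const * real K powr (-1/4)"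
    by (simp add: powr_minus_divide)
  then show ?thesis
    unfolding sum_nn_integral_sps_O S_def[symmetric] using S_nonneg K
    by (simp add: ennreal_mult[symmetric] ennreal_leI)
qed

end

context sps_noise_model
begin

lemma sps_average_residual_rate:
  fixes M :: "'m measure" and \<epsilon> e :: "nat \<Rightarrow> 'm \<Rightarrow> 'a"
  assumes K: "1 \<le> K"
  defines "\<rho> \<equiv> min (real K powr (-1/4)) (1 / (2 * L))"
  assumes prob: "prob_space M"
    and noise: "sps_noise_conditions M n A B \<tau> \<rho> (Cf * \<rho>\<^sup>2) z1 w1 \<epsilon> e N1 N2 N3 N4 K"
  shows "ennreal (1 / real K)
      * (\<Sum>j=1..K. \<integral>\<^sup>+ \<omega>. ennreal (sps_O n A B \<tau> \<rho> (Cf * \<rho>\<^sup>2) z1 w1 \<epsilon> e j \<omega>) \<partial>M)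
    \<le> ennreal (rate_const * real K powr (-1/4))"
proof -
  note stepsize = sps_stepsize_bounds[OF K L_pos, folded \<rho>_def]
  interpret sps_run n A B \<tau> L zs ws Cf N1 N2 N3 N4 z1 w1 M \<epsilon> e K \<rho> "Cf * \<rho>\<^sup>2"
    by (intro sps_run.intro sps_noise_model_axioms sps_run_axioms.intro[OF prob K stepsize(1-4) refl noise])
  show ?thesis by (rule average_residual_le[OF stepsize(5)])
qed

end

theorem theorem2:
  fixes n :: nat and A :: "nat \<Rightarrow> 'a::euclidean_space \<Rightarrow> 'a set" and B :: "'a \<Rightarrow> 'a"
    and L \<tau> Cf N1 N2 N3 N4 :: real and z1 :: 'a and w1 :: "nat \<Rightarrow> 'a"
  assumes n: "1 \<le> n"
    and A_mm: "\<forall>i\<in>{1..n}. maximal_monotone (A i)"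
    and B_mono: "monotone_fun B" and L_pos: "0 < L" and B_lip: "L-lipschitz_on UNIV B"
    and sol: "\<exists>z a. (\<forall>i\<in>{1..n}. a i \<in> A i z) \<and> (\<Sum>i=1..n. a i) + B z = 0"
    and tau: "0 < \<tau>" and Cf: "0 < Cf"
    and N: "0 \<le> N1" "0 \<le> N2" "0 \<le> N3" "0 \<le> N4"
    and w1_sum: "(\<Sum>i=1..n+1. w1 i) = 0"
  shows "\<exists>C. \<forall>K::nat. 1 \<le> K \<longrightarrow>
    (let \<rho> = min (real K powr (-1/4)) (1 / (2 * L)); \<alpha> = Cf * \<rho>\<^sup>2 in
     \<forall>(M :: 'm measure) (\<epsilon> :: nat \<Rightarrow> 'm \<Rightarrow> 'a) (e :: nat \<Rightarrow> 'm \<Rightarrow> 'a).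
       prob_space M \<and>
       (\<forall>k\<in>{1..K}.
          \<epsilon> k \<in> borel_measurable M \<and> e k \<in> borel_measurable M \<and>
          integrable M (\<epsilon> k) \<and> integrable M (e k) \<and>
          (\<forall>b\<in>Basis. AE \<omega> in M.
             real_cond_exp M (sps_F M n A B \<tau> \<rho> \<alpha> z1 w1 \<epsilon> e k) (\<lambda>\<omega>. \<epsilon> k \<omega> \<bullet> b) \<omega> = 0) \<and>
          (\<forall>b\<in>Basis. AE \<omega> in M.
             real_cond_exp M (sps_F M n A B \<tau> \<rho> \<alpha> z1 w1 \<epsilon> e k) (\<lambda>\<omega>. e k \<omega> \<bullet> b) \<omega> = 0) \<and>
          (AE \<omega> in M.
             nn_cond_exp M (sps_F M n A B \<tau> \<rho> \<alpha> z1 w1 \<epsilon> e k)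
               (\<lambda>\<omega>. ennreal ((norm (\<epsilon> k \<omega>))\<^sup>2)) \<omega>
             \<le> ennreal (N1 + N2 * (norm (B (sps_z n A B \<tau> \<rho> \<alpha> z1 w1 \<epsilon> e k \<omega>)))\<^sup>2)) \<and>
          (AE \<omega> in M.
             nn_cond_exp M (sps_FE M n A B \<tau> \<rho> \<alpha> z1 w1 \<epsilon> e k)
               (\<lambda>\<omega>. ennreal ((norm (e k \<omega>))\<^sup>2)) \<omega>
             \<le> ennreal (N3 + N4 * (norm (B (sps_x n A B \<tau> \<rho>
                   (sps_z n A B \<tau> \<rho> \<alpha> z1 w1 \<epsilon> e k \<omega>) (sps_w n A B \<tau> \<rho> \<alpha> z1 w1 \<epsilon> e k \<omega>)
                   (\<epsilon> k \<omega>) (n + 1))))\<^sup>2)))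
       \<longrightarrow> ennreal (1 / real K) * (\<Sum>j=1..K. \<integral>\<^sup>+ \<omega>. ennreal (sps_O n A B \<tau> \<rho> \<alpha> z1 w1 \<epsilon> e j \<omega>) \<partial>M)
           \<le> ennreal (C * real K powr (-1/4)))"
proof -
  obtain zs a where a: "\<forall>i\<in>{1..n}. a i \<in> A i zs" and zero: "(\<Sum>i=1..n. a i) + B zs = 0"
    using sol by blast
  define ws where "ws i = (if i \<le> n then a i else B zs)" for i
  have "(\<Sum>i=1..n. ws i) = (\<Sum>i=1..n. a i)" unfolding ws_def by (intro sum.cong) auto
  then have "(\<Sum>i=1..n+1. ws i) = 0" using zero by (simp add: ws_def)
  then interpret sps_noise_model n A B \<tau> L zs ws Cf N1 N2 N3 N4 z1 w1
    using A_mm B_mono L_pos B_lip tau a Cf N w1_sum by unfold_locales (auto simp: ws_def)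
  show ?thesis
    unfolding Let_def sps_noise_conditions_def[symmetric] using sps_average_residual_rate by blast
qed

end
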